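(* Let $i:B\to A$ be a $k$-linear $X$-functor from a diagonal $k$-linear category $B$ to a $k$-linear category $A$, and assume that $A_{xy}$ is a finitely generated projective left $B_x$-module for all $x,y\in X$. Let $\mathcal{A}={}_B{\rm End}(A)$. For a descent datum $(M,\sigma)$, define a right $\mathcal{A}$-action on $M$ by $mf=m_{<0>}f(m_{<1>})\in M_{xz}$ for $m\in M_{xy}$, $f\in\mathcal{A}^x_{yz}$. This defines a functor $\underline{\rm Desc}_B(A)\to\mathcal{M}_\mathcal{A}$, $(M,\sigma)\mapsto M$, acting as the identity on morphisms, and this functor is an isomorphism of categories.
   Context: Let $k$ be a commutative ring; unadorned $\otimes$ is over $k$. A $k$-linear category $A$ with class of objects $X$ consists of $k$-modules $A_{xy}$, associative compositions $A_{xy}\otimes A_{yz}\to A_{xz}$, $a\otimes b\mapsto ab$, and units $1_x\in A_{xx}$. A right $A$-module is a family $(M_{xy})_{x,y\in X}$ with maps $M_{xy}\otimes A_{yz}\to M_{xz}$, associative and unital. A diagonal $k$-linear category $B$ is a family of $k$-algebras $(B_x)_{x\in X}$. A $k$-linear $X$-functor $i:B\to A$ amounts to $k$-algebra morphisms $i_x:B_x\to A_{xx}$, making $A_{xy}$ a $B_x$-$B_y$-bimodule and $M_{xy}$ a right $B_y$-module. A descent datum $(M,\sigma)$ is a right $A$-module $M$ with $k$-linear maps $\sigma_{xy}:M_{xy}\to M_{xx}\otimes_{B_x}A_{xy}$, $\sigma_{xy}(m)=m_{<0>}\otimes_{B_x}m_{<1>}$, such that for all $m\in M_{xy}$, $a\in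 A_{yz}$: (i) $\sigma_{xz}(ma)=m_{<0>}\otimes_{B_x}m_{<1>}a$; (ii) $\sigma_{xx}(m_{<0>})\otimes_{B_x}m_{<1>}=m_{<0>}\otimes_{B_x}1_x\otimes_{B_x}m_{<1>}$; (iii) $m_{<0>}m_{<1>}=m$. Morphisms of descent data are right $A$-module morphisms $f$ with $f_{xx}(m_{<0>})\otimes_{B_x}m_{<1>}=\sigma'_{xy}(f_{xy}(m))$; the category is $\underline{\rm Desc}_B(A)$. A $k$-linear cluster $\mathcal{A}$ with objects $X$ is a family $(\mathcal{A}^x)_{x\in X}$ of $k$-linear categories with object class $X$; $\mathcal{A}^x_{yz}$ has unit $1^x_y\in\mathcal{A}^x_{yy}$. A right $\mathcal{A}$-module is a family $(M_{xy})$ of $k$-modules with maps $M_{xy}\otimes\mathcal{A}^x_{yz}\to M_{xz}$, $m\otimes f\mapsto mf$, with $m(fg)=(mf)g$ and $m1^x_y=m$; morphisms are families $\varphi_{xy}$ with $\varphi_{xz}(mf)=\varphi_{xy}(m)f$; the category is $\mathcal{M}_\mathcal{A}$. The left endocluster $\mathcal{A}={}_B{\rm End}(A)$ is given by $\mathcal{A}^x_{yz}={}_{B_x}{\rm Hom}(A_{xy},A_{xz})$ with multiplication $fg=g\circ f$ and unit $1^x_y={\rm id}_{A_{xy}}$. *)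

theory Defs
  imports Main "HOL.Modules" "HOL-Library.FuncSet" "HOL-Library.Function_Algebras"
begin

text \<open>All hom-modules A_xy are k-submodules of one ambient k-module (type 'a, scalar sA);
  likewise the algebras B_x inside type 'b and module families M_xy inside type 'm.
  Compositions / actions carry all object indices.\<close>

definition ksubmod :: "('k \<Rightarrow> 'm::ab_group_add \<Rightarrow> 'm) \<Rightarrow> 'm set \<Rightarrow> bool" where
  "ksubmod s S \<longleftrightarrow> 0 \<in> S \<and> (\<forall>x\<in>S. \<forall>y\<in>S. x + y \<in> S) \<and> (\<forall>c. \<forall>x\<in>S. s c x \<in> S)"

record ('k, 'x, 'a, 'b) kdata =
  sA  :: "'k \<Rightarrow> 'a \<Rightarrow> 'a"
  Ah  :: "'x \<Rightarrow> 'x \<Rightarrow> 'a set"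
  cmp :: "'x \<Rightarrow> 'x \<Rightarrow> 'x \<Rightarrow> 'a \<Rightarrow> 'a \<Rightarrow> 'a"
  one :: "'x \<Rightarrow> 'a"
  sB  :: "'k \<Rightarrow> 'b \<Rightarrow> 'b"
  Bc  :: "'x \<Rightarrow> 'b set"
  bm  :: "'x \<Rightarrow> 'b \<Rightarrow> 'b \<Rightarrow> 'b"
  bone :: "'x \<Rightarrow> 'b"
  fi  :: "'x \<Rightarrow> 'b \<Rightarrow> 'a"

definition klin_cat :: "('k::comm_ring_1, 'x, 'a::ab_group_add, 'b) kdata \<Rightarrow> bool" where
  "klin_cat D \<longleftrightarrow> module (sA D) \<and>
     (\<forall>x y. ksubmod (sA D) (Ah D x y)) \<and>
     (\<forall>x y z. \<forall>a\<in>Ah D x y. \<forall>b\<in>Ah D y z. cmp D x y z a b \<in> Ah D x z) \<and>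
     (\<forall>x y z. \<forall>a\<in>Ah D x y. \<forall>a'\<in>Ah D x y. \<forall>b\<in>Ah D y z.
        cmp D x y z (a + a') b = cmp D x y z a b + cmp D x y z a' b) \<and>
     (\<forall>x y z. \<forall>a\<in>Ah D x y. \<forall>b\<in>Ah D y z. \<forall>b'\<in>Ah D y z.
        cmp D x y z a (b + b') = cmp D x y z a b + cmp D x y z a b') \<and>
     (\<forall>x y z c. \<forall>a\<in>Ah D x y. \<forall>b\<in>Ah D y z.
        cmp D x y z (sA D c a) b = sA D c (cmp D x y z a b) \<and>
        cmp D x y z a (sA D c b) = sA D c (cmp D x y z a b)) \<and>
     (\<forall>x y z w. \<forall>a\<in>Ah D x y. \<forall>b\<in>Ah D y z. \<forall>c\<in>Ah D z w.
        cmp D x z w (cmp D x y z a b) c = cmp D x y w a (cmp D y z w b c)) \<and>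
     (\<forall>x. one D x \<in> Ah D x x) \<and>
     (\<forall>x y. \<forall>a\<in>Ah D x y. cmp D x x y (one D x) a = a \<and> cmp D x y y a (one D y) = a)"

text \<open>Diagonal k-linear category: a family of k-algebras B_x.\<close>
definition diag_cat :: "('k::comm_ring_1, 'x, 'a, 'b::ab_group_add) kdata \<Rightarrow> bool" where
  "diag_cat D \<longleftrightarrow> module (sB D) \<and>
     (\<forall>x. ksubmod (sB D) (Bc D x)) \<and>
     (\<forall>x. \<forall>a\<in>Bc D x. \<forall>b\<in>Bc D x. bm D x a b \<in> Bc D x) \<and>
     (\<forall>x. \<forall>a\<in>Bc D x. \<forall>a'\<in>Bc D x. \<forall>b\<in>Bc D x.
        bm D x (a + a') b = bm D x a b + bm D x a' b \<and>
        bm D x b (a + a') = bm D x b a + bm D x b a') \<and>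
     (\<forall>x c. \<forall>a\<in>Bc D x. \<forall>b\<in>Bc D x.
        bm D x (sB D c a) b = sB D c (bm D x a b) \<and> bm D x a (sB D c b) = sB D c (bm D x a b)) \<and>
     (\<forall>x. \<forall>a\<in>Bc D x. \<forall>b\<in>Bc D x. \<forall>c\<in>Bc D x. bm D x (bm D x a b) c = bm D x a (bm D x b c)) \<and>
     (\<forall>x. bone D x \<in> Bc D x) \<and>
     (\<forall>x. \<forall>a\<in>Bc D x. bm D x (bone D x) a = a \<and> bm D x a (bone D x) = a)"

text \<open>k-linear X-functor i : B \<rightarrow> A, i.e. k-algebra maps i_x : B_x \<rightarrow> A_xx.\<close>
definition xfunctor :: "('k::comm_ring_1, 'x, 'a::ab_group_add, 'b::ab_group_add) kdata \<Rightarrow> bool" where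
  "xfunctor D \<longleftrightarrow>
     (\<forall>x. \<forall>b\<in>Bc D x. fi D x b \<in> Ah D x x) \<and>
     (\<forall>x. \<forall>b\<in>Bc D x. \<forall>b'\<in>Bc D x. fi D x (b + b') = fi D x b + fi D x b') \<and>
     (\<forall>x c. \<forall>b\<in>Bc D x. fi D x (sB D c b) = sA D c (fi D x b)) \<and>
     (\<forall>x. \<forall>b\<in>Bc D x. \<forall>b'\<in>Bc D x. fi D x (bm D x b b') = cmp D x x x (fi D x b) (fi D x b')) \<and>
     (\<forall>x. fi D x (bone D x) = one D x)"

definition lB :: "('k, 'x, 'a, 'b) kdata \<Rightarrow> 'x \<Rightarrow> 'x \<Rightarrow> 'b \<Rightarrow> 'a \<Rightarrow> 'a" where
  "lB D x y b a = cmp D x x y (fi D x b) a"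

definition Blin_dual :: "('k, 'x, 'a::ab_group_add, 'b::ab_group_add) kdata \<Rightarrow> 'x \<Rightarrow> 'x \<Rightarrow> ('a \<Rightarrow> 'b) \<Rightarrow> bool" where
  "Blin_dual D x y \<phi> \<longleftrightarrow> (\<forall>a\<in>Ah D x y. \<phi> a \<in> Bc D x) \<and>
     (\<forall>a\<in>Ah D x y. \<forall>a'\<in>Ah D x y. \<phi> (a + a') = \<phi> a + \<phi> a') \<and>
     (\<forall>b\<in>Bc D x. \<forall>a\<in>Ah D x y. \<phi> (lB D x y b a) = bm D x b (\<phi> a))"

text \<open>A_xy is a finitely generated projective left B_x-module: it is a direct summand
  (retract) of a free module B_x^n, i.e. there are e_1..e_n in A_xy and B_x-linear
  maps phi_j : A_xy \<rightarrow> B_x with a = sum_j phi_j(a) . e_j (the retraction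
  B_x^n \<rightarrow> A_xy, (b_j) \<mapsto> sum b_j e_j, split by a \<mapsto> (phi_j a)).\<close>
definition fg_projective :: "('k, 'x, 'a::ab_group_add, 'b::ab_group_add) kdata \<Rightarrow> 'x \<Rightarrow> 'x \<Rightarrow> bool" where
  "fg_projective D x y \<longleftrightarrow> (\<exists>(n::nat) e \<phi>. (\<forall>j<n. e j \<in> Ah D x y) \<and> (\<forall>j<n. Blin_dual D x y (\<phi> j)) \<and>
      (\<forall>a\<in>Ah D x y. a = (\<Sum>j<n. lB D x y (\<phi> j a) (e j))))"

definition rmod :: "('k::comm_ring_1, 'x, 'a::ab_group_add, 'b) kdata \<Rightarrow> ('k \<Rightarrow> 'm::ab_group_add \<Rightarrow> 'm) \<Rightarrow>
    ('x \<Rightarrow> 'x \<Rightarrow> 'm set) \<Rightarrow> ('x \<Rightarrow> 'x \<Rightarrow> 'x \<Rightarrow> 'm \<Rightarrow> 'a \<Rightarrow> 'm) \<Rightarrow> bool" where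
  "rmod D sM Mc act \<longleftrightarrow> module sM \<and> (\<forall>x y. ksubmod sM (Mc x y)) \<and>
     (\<forall>x y z. \<forall>m\<in>Mc x y. \<forall>a\<in>Ah D y z. act x y z m a \<in> Mc x z) \<and>
     (\<forall>x y z. \<forall>m\<in>Mc x y. \<forall>m'\<in>Mc x y. \<forall>a\<in>Ah D y z.
        act x y z (m + m') a = act x y z m a + act x y z m' a) \<and>
     (\<forall>x y z. \<forall>m\<in>Mc x y. \<forall>a\<in>Ah D y z. \<forall>a'\<in>Ah D y z.
        act x y z m (a + a') = act x y z m a + act x y z m a') \<and>
     (\<forall>x y z c. \<forall>m\<in>Mc x y. \<forall>a\<in>Ah D y z.
        act x y z (sM c m) a = sM c (act x y z m a) \<and> act x y z m (sA D c a) = sM c (act x y z m a)) \<and>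
     (\<forall>x y z w. \<forall>m\<in>Mc x y. \<forall>a\<in>Ah D y z. \<forall>b\<in>Ah D z w.
        act x z w (act x y z m a) b = act x y w m (cmp D y z w a b)) \<and>
     (\<forall>x y. \<forall>m\<in>Mc x y. act x y y m (one D y) = m)"

definition klin_fam :: "('k \<Rightarrow> 'm::ab_group_add \<Rightarrow> 'm) \<Rightarrow> ('x \<Rightarrow> 'x \<Rightarrow> 'm set) \<Rightarrow>
    ('k \<Rightarrow> 'n::ab_group_add \<Rightarrow> 'n) \<Rightarrow> ('x \<Rightarrow> 'x \<Rightarrow> 'n set) \<Rightarrow> ('x \<Rightarrow> 'x \<Rightarrow> 'm \<Rightarrow> 'n) \<Rightarrow> bool" where
  "klin_fam sM Mc sN Nc f \<longleftrightarrow> (\<forall>x y. \<forall>m\<in>Mc x y. f x y m \<in> Nc x y) \<and>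
     (\<forall>x y. \<forall>m\<in>Mc x y. \<forall>m'\<in>Mc x y. f x y (m + m') = f x y m + f x y m') \<and>
     (\<forall>x y c. \<forall>m\<in>Mc x y. f x y (sM c m) = sN c (f x y m))"

definition rmod_hom :: "('k, 'x, 'a, 'b) kdata \<Rightarrow>
    ('k \<Rightarrow> 'm::ab_group_add \<Rightarrow> 'm) \<Rightarrow> ('x \<Rightarrow> 'x \<Rightarrow> 'm set) \<Rightarrow> ('x \<Rightarrow> 'x \<Rightarrow> 'x \<Rightarrow> 'm \<Rightarrow> 'a \<Rightarrow> 'm) \<Rightarrow>
    ('k \<Rightarrow> 'n::ab_group_add \<Rightarrow> 'n) \<Rightarrow> ('x \<Rightarrow> 'x \<Rightarrow> 'n set) \<Rightarrow> ('x \<Rightarrow> 'x \<Rightarrow> 'x \<Rightarrow> 'n \<Rightarrow> 'a \<Rightarrow> 'n) \<Rightarrow>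
    ('x \<Rightarrow> 'x \<Rightarrow> 'm \<Rightarrow> 'n) \<Rightarrow> bool" where
  "rmod_hom D sM Mc act sN Nc act' f \<longleftrightarrow> klin_fam sM Mc sN Nc f \<and>
     (\<forall>x y z. \<forall>m\<in>Mc x y. \<forall>a\<in>Ah D y z. f x z (act x y z m a) = act' x y z (f x y m) a)"

text \<open>An element of P \<otimes>_B Q is represented by a list [(p_1,q_1),...] standing for
  sum p_i \<otimes> q_i.  Two lists represent the same element iff the difference of their
  formal sums in the free abelian group on P \<times> Q lies in the subgroup generated by
  the bilinearity and B-balancing relations.\<close>

definition delta :: "'z \<Rightarrow> 'z \<Rightarrow> int" where
  "delta z = (\<lambda>w. if w = z then 1 else 0)"

definition formal :: "'z list \<Rightarrow> 'z \<Rightarrow> int" where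
  "formal L = sum_list (map delta L)"

inductive_set gsub :: "('z \<Rightarrow> int) set \<Rightarrow> ('z \<Rightarrow> int) set" for G where
  gsub_zero: "0 \<in> gsub G"
| gsub_gen: "g \<in> G \<Longrightarrow> g \<in> gsub G"
| gsub_diff: "u \<in> gsub G \<Longrightarrow> v \<in> gsub G \<Longrightarrow> u - v \<in> gsub G"

definition rel2 :: "'p::ab_group_add set \<Rightarrow> 'q::ab_group_add set \<Rightarrow> ('b \<Rightarrow> 'p \<Rightarrow> 'p) \<Rightarrow> ('b \<Rightarrow> 'q \<Rightarrow> 'q) \<Rightarrow>
    'b set \<Rightarrow> ('p \<times> 'q \<Rightarrow> int) set" where
  "rel2 P Q rP lQ Bs =
     {delta (p + p', q) - delta (p, q) - delta (p', q) | p p' q. p \<in> P \<and> p' \<in> P \<and> q \<in> Q} \<union>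
     {delta (p, q + q') - delta (p, q) - delta (p, q') | p q q'. p \<in> P \<and> q \<in> Q \<and> q' \<in> Q} \<union>
     {delta (rP b p, q) - delta (p, lQ b q) | b p q. b \<in> Bs \<and> p \<in> P \<and> q \<in> Q}"

definition teq2 :: "'p::ab_group_add set \<Rightarrow> 'q::ab_group_add set \<Rightarrow> ('b \<Rightarrow> 'p \<Rightarrow> 'p) \<Rightarrow> ('b \<Rightarrow> 'q \<Rightarrow> 'q) \<Rightarrow>
    'b set \<Rightarrow> ('p \<times> 'q) list \<Rightarrow> ('p \<times> 'q) list \<Rightarrow> bool" where
  "teq2 P Q rP lQ Bs L L' \<longleftrightarrow> set L \<subseteq> P \<times> Q \<and> set L' \<subseteq> P \<times> Q \<and>
     formal L - formal L' \<in> gsub (rel2 P Q rP lQ Bs)"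

definition rel3 :: "'p::ab_group_add set \<Rightarrow> 'q::ab_group_add set \<Rightarrow> 'r::ab_group_add set \<Rightarrow>
    ('b \<Rightarrow> 'p \<Rightarrow> 'p) \<Rightarrow> ('b \<Rightarrow> 'q \<Rightarrow> 'q) \<Rightarrow> ('b \<Rightarrow> 'q \<Rightarrow> 'q) \<Rightarrow> ('b \<Rightarrow> 'r \<Rightarrow> 'r) \<Rightarrow>
    'b set \<Rightarrow> ('p \<times> 'q \<times> 'r \<Rightarrow> int) set" where
  "rel3 P Q R rP lQ rQ lR Bs =
     {delta (p + p', q, r) - delta (p, q, r) - delta (p', q, r) | p p' q r. p \<in> P \<and> p' \<in> P \<and> q \<in> Q \<and> r \<in> R} \<union>
     {delta (p, q + q', r) - delta (p, q, r) - delta (p, q', r) | p q q' r. p \<in> P \<and> q \<in> Q \<and> q' \<in> Q \<and> r \<in> R} \<union>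
     {delta (p, q, r + r') - delta (p, q, r) - delta (p, q, r') | p q r r'. p \<in> P \<and> q \<in> Q \<and> r \<in> R \<and> r' \<in> R} \<union>
     {delta (rP b p, q, r) - delta (p, lQ b q, r) | b p q r. b \<in> Bs \<and> p \<in> P \<and> q \<in> Q \<and> r \<in> R} \<union>
     {delta (p, rQ b q, r) - delta (p, q, lR b r) | b p q r. b \<in> Bs \<and> p \<in> P \<and> q \<in> Q \<and> r \<in> R}"

definition teq3 :: "'p::ab_group_add set \<Rightarrow> 'q::ab_group_add set \<Rightarrow> 'r::ab_group_add set \<Rightarrow>
    ('b \<Rightarrow> 'p \<Rightarrow> 'p) \<Rightarrow> ('b \<Rightarrow> 'q \<Rightarrow> 'q) \<Rightarrow> ('b \<Rightarrow> 'q \<Rightarrow> 'q) \<Rightarrow> ('b \<Rightarrow> 'r \<Rightarrow> 'r) \<Rightarrow>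
    'b set \<Rightarrow> ('p \<times> 'q \<times> 'r) list \<Rightarrow> ('p \<times> 'q \<times> 'r) list \<Rightarrow> bool" where
  "teq3 P Q R rP lQ rQ lR Bs L L' \<longleftrightarrow> set L \<subseteq> P \<times> Q \<times> R \<and> set L' \<subseteq> P \<times> Q \<times> R \<and>
     formal L - formal L' \<in> gsub (rel3 P Q R rP lQ rQ lR Bs)"

definition tMA :: "('k, 'x, 'a::ab_group_add, 'b) kdata \<Rightarrow> ('x \<Rightarrow> 'x \<Rightarrow> 'm::ab_group_add set) \<Rightarrow>
    ('x \<Rightarrow> 'x \<Rightarrow> 'x \<Rightarrow> 'm \<Rightarrow> 'a \<Rightarrow> 'm) \<Rightarrow> 'x \<Rightarrow> 'x \<Rightarrow> ('m \<times> 'a) list \<Rightarrow> ('m \<times> 'a) list \<Rightarrow> bool" where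
  "tMA D Mc act x y = teq2 (Mc x x) (Ah D x y) (\<lambda>b m. act x x x m (fi D x b)) (lB D x y) (Bc D x)"

definition tMAA :: "('k, 'x, 'a::ab_group_add, 'b) kdata \<Rightarrow> ('x \<Rightarrow> 'x \<Rightarrow> 'm::ab_group_add set) \<Rightarrow>
    ('x \<Rightarrow> 'x \<Rightarrow> 'x \<Rightarrow> 'm \<Rightarrow> 'a \<Rightarrow> 'm) \<Rightarrow> 'x \<Rightarrow> 'x \<Rightarrow> ('m \<times> 'a \<times> 'a) list \<Rightarrow> ('m \<times> 'a \<times> 'a) list \<Rightarrow> bool" where
  "tMAA D Mc act x y = teq3 (Mc x x) (Ah D x x) (Ah D x y) (\<lambda>b m. act x x x m (fi D x b)) (lB D x x)
      (\<lambda>b a. cmp D x x x a (fi D x b)) (lB D x y) (Bc D x)"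

text \<open>sigma x y m is a representative of sigma_xy(m) = m_<0> \<otimes> m_<1>.\<close>
definition descent :: "('k::comm_ring_1, 'x, 'a::ab_group_add, 'b) kdata \<Rightarrow> ('k \<Rightarrow> 'm::ab_group_add \<Rightarrow> 'm) \<Rightarrow>
    ('x \<Rightarrow> 'x \<Rightarrow> 'm set) \<Rightarrow> ('x \<Rightarrow> 'x \<Rightarrow> 'x \<Rightarrow> 'm \<Rightarrow> 'a \<Rightarrow> 'm) \<Rightarrow> ('x \<Rightarrow> 'x \<Rightarrow> 'm \<Rightarrow> ('m \<times> 'a) list) \<Rightarrow> bool" where
  "descent D sM Mc act \<sigma> \<longleftrightarrow> rmod D sM Mc act \<and>
     (\<forall>x y. \<forall>m\<in>Mc x y. set (\<sigma> x y m) \<subseteq> Mc x x \<times> Ah D x y) \<and>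
     \<comment> \<open>k-linearity of sigma_xy\<close>
     (\<forall>x y. \<forall>m\<in>Mc x y. \<forall>m'\<in>Mc x y. tMA D Mc act x y (\<sigma> x y (m + m')) (\<sigma> x y m @ \<sigma> x y m')) \<and>
     (\<forall>x y c. \<forall>m\<in>Mc x y. tMA D Mc act x y (\<sigma> x y (sM c m)) (map (\<lambda>(p, a). (sM c p, a)) (\<sigma> x y m))) \<and>
     \<comment> \<open>(i)\<close>
     (\<forall>x y z. \<forall>m\<in>Mc x y. \<forall>a\<in>Ah D y z.
        tMA D Mc act x z (\<sigma> x z (act x y z m a)) (map (\<lambda>(p, a'). (p, cmp D x y z a' a)) (\<sigma> x y m))) \<and>
     \<comment> \<open>(ii)\<close>
     (\<forall>x y. \<forall>m\<in>Mc x y.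
        tMAA D Mc act x y (concat (map (\<lambda>(p, a). map (\<lambda>(q, a'). (q, a', a)) (\<sigma> x x p)) (\<sigma> x y m)))
                          (map (\<lambda>(p, a). (p, one D x, a)) (\<sigma> x y m))) \<and>
     \<comment> \<open>(iii)\<close>
     (\<forall>x y. \<forall>m\<in>Mc x y. sum_list (map (\<lambda>(p, a). act x x y p a) (\<sigma> x y m)) = m)"

definition desc_hom :: "('k::comm_ring_1, 'x, 'a::ab_group_add, 'b) kdata \<Rightarrow>
    ('k \<Rightarrow> 'm::ab_group_add \<Rightarrow> 'm) \<Rightarrow> ('x \<Rightarrow> 'x \<Rightarrow> 'm set) \<Rightarrow> ('x \<Rightarrow> 'x \<Rightarrow> 'x \<Rightarrow> 'm \<Rightarrow> 'a \<Rightarrow> 'm) \<Rightarrow> ('x \<Rightarrow> 'x \<Rightarrow> 'm \<Rightarrow> ('m \<times> 'a) list) \<Rightarrow>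
    ('k \<Rightarrow> 'n::ab_group_add \<Rightarrow> 'n) \<Rightarrow> ('x \<Rightarrow> 'x \<Rightarrow> 'n set) \<Rightarrow> ('x \<Rightarrow> 'x \<Rightarrow> 'x \<Rightarrow> 'n \<Rightarrow> 'a \<Rightarrow> 'n) \<Rightarrow> ('x \<Rightarrow> 'x \<Rightarrow> 'n \<Rightarrow> ('n \<times> 'a) list) \<Rightarrow>
    ('x \<Rightarrow> 'x \<Rightarrow> 'm \<Rightarrow> 'n) \<Rightarrow> bool" where
  "desc_hom D sM Mc act \<sigma> sN Nc act' \<sigma>' f \<longleftrightarrow> rmod_hom D sM Mc act sN Nc act' f \<and>
     (\<forall>x y. \<forall>m\<in>Mc x y. tMA D Nc act' x y (map (\<lambda>(p, a). (f x x p, a)) (\<sigma> x y m)) (\<sigma>' x y (f x y m)))"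

text \<open>Two descent data on the same k-module family are the same object of Desc_B(A).\<close>
definition same_desc :: "('k, 'x, 'a::ab_group_add, 'b) kdata \<Rightarrow> ('x \<Rightarrow> 'x \<Rightarrow> 'm::ab_group_add set) \<Rightarrow>
    ('x \<Rightarrow> 'x \<Rightarrow> 'x \<Rightarrow> 'm \<Rightarrow> 'a \<Rightarrow> 'm) \<Rightarrow> ('x \<Rightarrow> 'x \<Rightarrow> 'm \<Rightarrow> ('m \<times> 'a) list) \<Rightarrow>
    ('x \<Rightarrow> 'x \<Rightarrow> 'x \<Rightarrow> 'm \<Rightarrow> 'a \<Rightarrow> 'm) \<Rightarrow> ('x \<Rightarrow> 'x \<Rightarrow> 'm \<Rightarrow> ('m \<times> 'a) list) \<Rightarrow> bool" where
  "same_desc D Mc act \<sigma> act' \<sigma>' \<longleftrightarrow>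
     (\<forall>x y z. \<forall>m\<in>Mc x y. \<forall>a\<in>Ah D y z. act x y z m a = act' x y z m a) \<and>
     (\<forall>x y. \<forall>m\<in>Mc x y. tMA D Mc act x y (\<sigma> x y m) (\<sigma>' x y m))"

text \<open>\<A>^x_yz = _{B_x}Hom(A_xy, A_xz), maps represented extensionally on A_xy.\<close>
definition EndC :: "('k, 'x, 'a::ab_group_add, 'b) kdata \<Rightarrow> 'x \<Rightarrow> 'x \<Rightarrow> 'x \<Rightarrow> ('a \<Rightarrow> 'a) set" where
  "EndC D x y z = {f. f \<in> Ah D x y \<rightarrow> Ah D x z \<and> f \<in> extensional (Ah D x y) \<and>
      (\<forall>a\<in>Ah D x y. \<forall>a'\<in>Ah D x y. f (a + a') = f a + f a') \<and>
      (\<forall>b\<in>Bc D x. \<forall>a\<in>Ah D x y. f (lB D x y b a) = lB D x z b (f a))}"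

definition cadd :: "('k, 'x, 'a::ab_group_add, 'b) kdata \<Rightarrow> 'x \<Rightarrow> 'x \<Rightarrow> ('a \<Rightarrow> 'a) \<Rightarrow> ('a \<Rightarrow> 'a) \<Rightarrow> 'a \<Rightarrow> 'a" where
  "cadd D x y f g = restrict (\<lambda>a. f a + g a) (Ah D x y)"

definition csc :: "('k, 'x, 'a, 'b) kdata \<Rightarrow> 'x \<Rightarrow> 'x \<Rightarrow> 'k \<Rightarrow> ('a \<Rightarrow> 'a) \<Rightarrow> 'a \<Rightarrow> 'a" where
  "csc D x y c f = restrict (\<lambda>a. sA D c (f a)) (Ah D x y)"

text \<open>Multiplication of the cluster: fg = g \<circ> f.\<close>
definition ccomp :: "('k, 'x, 'a, 'b) kdata \<Rightarrow> 'x \<Rightarrow> 'x \<Rightarrow> ('a \<Rightarrow> 'a) \<Rightarrow> ('a \<Rightarrow> 'a) \<Rightarrow> 'a \<Rightarrow> 'a" where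
  "ccomp D x y f g = restrict (g \<circ> f) (Ah D x y)"

definition cunit :: "('k, 'x, 'a, 'b) kdata \<Rightarrow> 'x \<Rightarrow> 'x \<Rightarrow> 'a \<Rightarrow> 'a" where
  "cunit D x y = restrict id (Ah D x y)"

definition rcmod :: "('k::comm_ring_1, 'x, 'a::ab_group_add, 'b) kdata \<Rightarrow> ('k \<Rightarrow> 'm::ab_group_add \<Rightarrow> 'm) \<Rightarrow>
    ('x \<Rightarrow> 'x \<Rightarrow> 'm set) \<Rightarrow> ('x \<Rightarrow> 'x \<Rightarrow> 'x \<Rightarrow> 'm \<Rightarrow> ('a \<Rightarrow> 'a) \<Rightarrow> 'm) \<Rightarrow> bool" where
  "rcmod D sM Mc \<rho> \<longleftrightarrow> module sM \<and> (\<forall>x y. ksubmod sM (Mc x y)) \<and>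
     (\<forall>x y z. \<forall>m\<in>Mc x y. \<forall>f\<in>EndC D x y z. \<rho> x y z m f \<in> Mc x z) \<and>
     (\<forall>x y z. \<forall>m\<in>Mc x y. \<forall>m'\<in>Mc x y. \<forall>f\<in>EndC D x y z.
        \<rho> x y z (m + m') f = \<rho> x y z m f + \<rho> x y z m' f) \<and>
     (\<forall>x y z. \<forall>m\<in>Mc x y. \<forall>f\<in>EndC D x y z. \<forall>g\<in>EndC D x y z.
        \<rho> x y z m (cadd D x y f g) = \<rho> x y z m f + \<rho> x y z m g) \<and>
     (\<forall>x y z c. \<forall>m\<in>Mc x y. \<forall>f\<in>EndC D x y z.
        \<rho> x y z (sM c m) f = sM c (\<rho> x y z m f) \<and> \<rho> x y z m (csc D x y c f) = sM c (\<rho> x y z m f)) \<and>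
     (\<forall>x y z w. \<forall>m\<in>Mc x y. \<forall>f\<in>EndC D x y z. \<forall>g\<in>EndC D x z w.
        \<rho> x z w (\<rho> x y z m f) g = \<rho> x y w m (ccomp D x y f g)) \<and>
     (\<forall>x y. \<forall>m\<in>Mc x y. \<rho> x y y m (cunit D x y) = m)"

definition rcmod_hom :: "('k, 'x, 'a::ab_group_add, 'b) kdata \<Rightarrow>
    ('k \<Rightarrow> 'm::ab_group_add \<Rightarrow> 'm) \<Rightarrow> ('x \<Rightarrow> 'x \<Rightarrow> 'm set) \<Rightarrow> ('x \<Rightarrow> 'x \<Rightarrow> 'x \<Rightarrow> 'm \<Rightarrow> ('a \<Rightarrow> 'a) \<Rightarrow> 'm) \<Rightarrow>
    ('k \<Rightarrow> 'n::ab_group_add \<Rightarrow> 'n) \<Rightarrow> ('x \<Rightarrow> 'x \<Rightarrow> 'n set) \<Rightarrow> ('x \<Rightarrow> 'x \<Rightarrow> 'x \<Rightarrow> 'n \<Rightarrow> ('a \<Rightarrow> 'a) \<Rightarrow> 'n) \<Rightarrow>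
    ('x \<Rightarrow> 'x \<Rightarrow> 'm \<Rightarrow> 'n) \<Rightarrow> bool" where
  "rcmod_hom D sM Mc \<rho> sN Nc \<rho>' \<phi> \<longleftrightarrow> klin_fam sM Mc sN Nc \<phi> \<and>
     (\<forall>x y z. \<forall>m\<in>Mc x y. \<forall>f\<in>EndC D x y z. \<phi> x z (\<rho> x y z m f) = \<rho>' x y z (\<phi> x y m) f)"

text \<open>Two right \<A>-module structures on the same family are the same object of M_\<A>.\<close>
definition same_cmod :: "('k, 'x, 'a::ab_group_add, 'b) kdata \<Rightarrow> ('x \<Rightarrow> 'x \<Rightarrow> 'm set) \<Rightarrow>
    ('x \<Rightarrow> 'x \<Rightarrow> 'x \<Rightarrow> 'm \<Rightarrow> ('a \<Rightarrow> 'a) \<Rightarrow> 'm) \<Rightarrow> ('x \<Rightarrow> 'x \<Rightarrow> 'x \<Rightarrow> 'm \<Rightarrow> ('a \<Rightarrow> 'a) \<Rightarrow> 'm) \<Rightarrow> bool" where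
  "same_cmod D Mc \<rho> \<rho>' \<longleftrightarrow> (\<forall>x y z. \<forall>m\<in>Mc x y. \<forall>f\<in>EndC D x y z. \<rho> x y z m f = \<rho>' x y z m f)"

definition desc_action :: "('x \<Rightarrow> 'x \<Rightarrow> 'x \<Rightarrow> 'm::ab_group_add \<Rightarrow> 'a \<Rightarrow> 'm) \<Rightarrow> ('x \<Rightarrow> 'x \<Rightarrow> 'm \<Rightarrow> ('m \<times> 'a) list) \<Rightarrow>
    'x \<Rightarrow> 'x \<Rightarrow> 'x \<Rightarrow> 'm \<Rightarrow> ('a \<Rightarrow> 'a) \<Rightarrow> 'm" where
  "desc_action act \<sigma> x y z m f = sum_list (map (\<lambda>(p, a). act x x z p (f a)) (\<sigma> x y m))"

end

theory Submission
  imports Defs "HOL-Library.Multiset"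
begin

text \<open>
  Since \<open>A\<^sub>x\<^sub>y\<close> is finitely generated projective, it has a dual basis \<open>(e\<^sub>j, \<phi>\<^sub>j)\<close>, and every
  left \<open>B\<^sub>x\<close>-linear \<open>f : A\<^sub>x\<^sub>y \<rightarrow> A\<^sub>x\<^sub>z\<close> satisfies \<open>f(c) = \<Sum>\<^sub>j i(\<phi>\<^sub>j c) f(e\<^sub>j)\<close>. In the
  endocluster this says that \<open>f\<close> is a sum of composites of the coordinate maps \<open>i \<circ> \<phi>\<^sub>j\<close> with
  right multiplications by elements of \<open>A\<close>. So a right \<open>\<A>\<close>-module is determined by its
  \<open>A\<close>-action \<open>m a = m(- a)\<close> together with the elements \<open>m(i \<circ> \<phi>\<^sub>j)\<close>, and these define the descent
  datum \<open>\<sigma>(m) = \<Sum>\<^sub>j m(i \<circ> \<phi>\<^sub>j) \<otimes> e\<^sub>j\<close>. Conversely, expanding \<open>m\<^sub><\<^sub>1\<^sub>>\<close> in the dual basis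
  puts every descent datum into exactly this form, so the two constructions are mutually
  inverse, and the same normal form shows that a morphism of right \<open>\<A>\<close>-modules preserves \<open>\<sigma>\<close>.
\<close>

definition modeq :: "('z \<Rightarrow> int) set \<Rightarrow> 'z list \<Rightarrow> 'z list \<Rightarrow> bool" where
  "modeq G L L' \<longleftrightarrow> formal L - formal L' \<in> gsub G"

lemma formal_Nil [simp]: "formal [] = 0"
  by (simp add: formal_def)

lemma formal_Cons [simp]: "formal (x # L) = delta x + formal L"
  by (simp add: formal_def)

lemma formal_append [simp]: "formal (L @ L') = formal L + formal L'"
  by (simp add: formal_def)

lemma formal_apply: "formal L z = int (count (mset L) z)"
  by (induction L) (auto simp: delta_def)

lemma formal_eq_iff_mset_eq: "formal L = formal L' \<longleftrightarrow> mset L = mset L'"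
  by (metis multiset_eqI formal_apply of_nat_eq_iff ext)

lemma gsub_uminus: "u \<in> gsub G \<Longrightarrow> - u \<in> gsub G"
  using gsub_diff[OF gsub_zero, of u] by simp

lemma gsub_add: "u \<in> gsub G \<Longrightarrow> v \<in> gsub G \<Longrightarrow> u + v \<in> gsub G"
  using gsub_diff[OF _ gsub_uminus, of u G v] by simp

lemma modeq_refl: "modeq G L L"
  by (simp add: modeq_def gsub_zero)

lemma modeq_sym: "modeq G L L' \<Longrightarrow> modeq G L' L"
  unfolding modeq_def using gsub_uminus by fastforce

lemma modeq_trans: "modeq G L L' \<Longrightarrow> modeq G L' L'' \<Longrightarrow> modeq G L L''"
  unfolding modeq_def using gsub_add by fastforce

lemma modeq_append: "modeq G L1 L1' \<Longrightarrow> modeq G L2 L2' \<Longrightarrow> modeq G (L1 @ L2) (L1' @ L2')"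
  unfolding modeq_def using gsub_add by (fastforce simp: algebra_simps)

lemma modeq_mset: "mset L = mset L' \<Longrightarrow> modeq G L L'"
  unfolding modeq_def by (simp add: formal_eq_iff_mset_eq[symmetric] gsub_zero)

lemma modeq_generator: "delta a - delta b \<in> G \<Longrightarrow> modeq G [a] [b]"
  unfolding modeq_def by (simp add: gsub_gen)

lemma modeq_generator3: "delta a - delta b - delta c \<in> G \<Longrightarrow> modeq G [a] [b, c]"
  unfolding modeq_def by (auto simp: algebra_simps dest: gsub_gen)

lemma gsub_representation:
  assumes "u \<in> gsub G"
    and gen: "\<And>g. g \<in> G \<Longrightarrow> \<exists>Lp Ln. g = formal Lp - formal Ln \<and> Q Lp Ln"
    and nil: "Q [] []"
    and comb: "\<And>a b c d. Q a b \<Longrightarrow> Q c d \<Longrightarrow> Q (a @ d) (b @ c)"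
  shows "\<exists>Lp Ln. u = formal Lp - formal Ln \<and> Q Lp Ln"
  using assms(1)
proof induction
  case gsub_zero
  then show ?case using nil by (intro exI[of _ "[]"]) auto
next
  case (gsub_gen g)
  then show ?case using gen by blast
next
  case (gsub_diff u v)
  then obtain a b c d where "u = formal a - formal b" "Q a b" "v = formal c - formal d" "Q c d"
    by blast
  then have "u - v = formal (a @ d) - formal (b @ c)" by (simp add: fun_eq_iff)
  then show ?case using comb[OF \<open>Q a b\<close> \<open>Q c d\<close>] by blast
qed

lemma modeq_representation:
  assumes "modeq G L L'"
    and gen: "\<And>g. g \<in> G \<Longrightarrow> \<exists>Lp Ln. g = formal Lp - formal Ln \<and> Q Lp Ln"
    and nil: "Q [] []"
    and comb: "\<And>a b c d. Q a b \<Longrightarrow> Q c d \<Longrightarrow> Q (a @ d) (b @ c)"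
  shows "\<exists>Lp Ln. mset (L @ Ln) = mset (L' @ Lp) \<and> Q Lp Ln"
proof -
  obtain Lp Ln where "formal L - formal L' = formal Lp - formal Ln" "Q Lp Ln"
    using gsub_representation[OF assms(1)[unfolded modeq_def] gen nil comb] by blast
  then have "formal (L @ Ln) = formal (L' @ Lp)" by (simp add: algebra_simps)
  then show ?thesis using \<open>Q Lp Ln\<close> formal_eq_iff_mset_eq by blast
qed

lemma sum_list_map_mset_eq:
  "mset A = mset B \<Longrightarrow> sum_list (map (\<phi> :: _ \<Rightarrow> 'm::comm_monoid_add) A) = sum_list (map \<phi> B)"
  by (metis mset_map sum_mset_sum_list)

lemma modeq_sum_list_eq:
  fixes \<phi> :: "'z \<Rightarrow> 'm::ab_group_add"
  assumes "modeq G L L'"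
    and gen: "\<And>g. g \<in> G \<Longrightarrow>
      \<exists>Lp Ln. g = formal Lp - formal Ln \<and> sum_list (map \<phi> Lp) = sum_list (map \<phi> Ln)"
  shows "sum_list (map \<phi> L) = sum_list (map \<phi> L')"
proof -
  obtain Lp Ln where "mset (L @ Ln) = mset (L' @ Lp)"
    and "sum_list (map \<phi> Lp) = sum_list (map \<phi> Ln)"
    using modeq_representation[where Q = "\<lambda>Lp Ln. sum_list (map \<phi> Lp) = sum_list (map \<phi> Ln)",
        OF assms(1) gen] by auto
  with sum_list_map_mset_eq[of "L @ Ln" "L' @ Lp" \<phi>] show ?thesis by simp
qed

lemma modeq_map:
  assumes "modeq G L L'"
    and gen: "\<And>g. g \<in> G \<Longrightarrow> \<exists>Lp Ln. g = formal Lp - formal Ln \<and> modeq G' (map h Lp) (map h Ln)"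
  shows "modeq G' (map h L) (map h L')"
proof -
  obtain Lp Ln where m: "mset (L @ Ln) = mset (L' @ Lp)" and e: "modeq G' (map h Lp) (map h Ln)"
    using modeq_representation[where Q = "\<lambda>Lp Ln. modeq G' (map h Lp) (map h Ln)", OF assms(1) gen]
    by (auto intro: modeq_refl dest: modeq_append[OF _ modeq_sym])
  have "mset (map h L @ map h Ln) = mset (map h L' @ map h Lp)"
    using m by (metis map_append mset_map)
  then have "modeq G' (map h L @ map h Ln) (map h L' @ map h Lp)" by (rule modeq_mset)
  then have "modeq G' (map h L @ map h Ln) (map h L' @ map h Ln)"
    by (rule modeq_trans) (rule modeq_append[OF modeq_refl e])
  then show ?thesis unfolding modeq_def by (simp add: algebra_simps)
qed

lemma sum_list_closed:
  assumes "0 \<in> S" and "\<And>u v. u \<in> S \<Longrightarrow> v \<in> S \<Longrightarrow> u + v \<in> S"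
    and "\<And>l. l \<in> set L \<Longrightarrow> g l \<in> S"
  shows "sum_list (map g L) \<in> S"
  using assms(3) by (induction L) (auto simp: assms(1,2))

lemma sum_lessThan_closed:
  fixes g :: "nat \<Rightarrow> 'u::ab_group_add"
  assumes "0 \<in> S" and "\<And>u v. u \<in> S \<Longrightarrow> v \<in> S \<Longrightarrow> u + v \<in> S"
    and "\<And>j. j < n \<Longrightarrow> g j \<in> S"
  shows "(\<Sum>j<n. g j) \<in> S"
  using assms(3) by (induction n) (auto simp: assms(1,2))

lemma sum_list_upt_eq_sum: "sum_list (map g [0..<n]) = (\<Sum>j<(n::nat). g j)"
  by (simp add: interv_sum_list_conv_sum_set_nat atLeast0LessThan)

lemma additive_on_sum_list:
  fixes h :: "'u::ab_group_add \<Rightarrow> 'v::ab_group_add"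
  assumes S0: "0 \<in> S" and Sadd: "\<And>u v. u \<in> S \<Longrightarrow> v \<in> S \<Longrightarrow> u + v \<in> S"
    and hadd: "\<And>u v. u \<in> S \<Longrightarrow> v \<in> S \<Longrightarrow> h (u + v) = h u + h v"
    and g: "\<And>l. l \<in> set L \<Longrightarrow> g l \<in> S"
  shows "h (sum_list (map g L)) = sum_list (map (\<lambda>l. h (g l)) L)"
  using g
proof (induction L)
  case Nil
  show ?case using hadd[OF S0 S0] by simp
next
  case (Cons l L)
  then show ?case by (simp add: hadd sum_list_closed[OF S0 Sadd])
qed

lemma additive_on_sum:
  fixes h :: "'u::ab_group_add \<Rightarrow> 'v::ab_group_add" and n :: nat
  assumes S0: "0 \<in> S" and Sadd: "\<And>u v. u \<in> S \<Longrightarrow> v \<in> S \<Longrightarrow> u + v \<in> S"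
    and hadd: "\<And>u v. u \<in> S \<Longrightarrow> v \<in> S \<Longrightarrow> h (u + v) = h u + h v"
    and g: "\<And>j. j < n \<Longrightarrow> g j \<in> S"
  shows "h (\<Sum>j<n. g j) = (\<Sum>j<n. h (g j))"
  using additive_on_sum_list[OF S0 Sadd hadd, of "[0..<n]" g] g
  by (simp add: sum_list_upt_eq_sum)

lemma sum_list_map_concat:
  "sum_list (map \<phi> (concat xss)) = sum_list (map (\<lambda>xs. sum_list (map \<phi> xs)) xss)"
  by (induction xss) auto

lemma module_scale_sum_list: "module s \<Longrightarrow> s c (sum_list (map g L)) = sum_list (map (\<lambda>l. s c (g l)) L)"
  by (induction L) (auto simp: module.scale_right_distrib module.scale_zero_right)

lemma mset_concat_map_swap:
  "mset (concat (map (\<lambda>i. map (F i) J) I)) = mset (concat (map (\<lambda>j. map (\<lambda>i. F i j) I) J))"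
proof (induction I)
  case Nil
  then show ?case by (induction J) auto
next
  case (Cons i I)
  have "mset (concat (map (\<lambda>j. F i j # map (\<lambda>i. F i j) I) J)) =
      mset (map (F i) J) + mset (concat (map (\<lambda>j. map (\<lambda>i. F i j) I) J))"
    by (induction J) auto
  with Cons show ?case by simp
qed

lemma mset_concat_map_pairs: "mset (concat (map (\<lambda>j. [a j, b j]) J)) = mset (map a J @ map b J)"
  by (induction J) auto

section \<open>Presented tensor products of two and three factors\<close>

lemma teq2_iff_modeq: "teq2 P Q rP lQ Bs L L' \<longleftrightarrow>
    set L \<subseteq> P \<times> Q \<and> set L' \<subseteq> P \<times> Q \<and> modeq (rel2 P Q rP lQ Bs) L L'"
  by (simp add: teq2_def modeq_def)

lemma teq2_refl: "set L \<subseteq> P \<times> Q \<Longrightarrow> teq2 P Q rP lQ Bs L L"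
  by (simp add: teq2_iff_modeq modeq_refl)

lemma teq2_sym: "teq2 P Q rP lQ Bs L L' \<Longrightarrow> teq2 P Q rP lQ Bs L' L"
  by (simp add: teq2_iff_modeq modeq_sym)

lemma teq2_trans:
  "teq2 P Q rP lQ Bs L L' \<Longrightarrow> teq2 P Q rP lQ Bs L' L'' \<Longrightarrow> teq2 P Q rP lQ Bs L L''"
  by (auto simp: teq2_iff_modeq intro: modeq_trans)

lemma teq2_append: "teq2 P Q rP lQ Bs L1 L1' \<Longrightarrow> teq2 P Q rP lQ Bs L2 L2' \<Longrightarrow>
    teq2 P Q rP lQ Bs (L1 @ L2) (L1' @ L2')"
  by (auto simp: teq2_iff_modeq intro: modeq_append)

lemma teq2_concat: "(\<And>i. i \<in> set I \<Longrightarrow> teq2 P Q rP lQ Bs (f i) (g i)) \<Longrightarrow>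
    teq2 P Q rP lQ Bs (concat (map f I)) (concat (map g I))"
  by (induction I) (auto intro: teq2_append teq2_refl)

lemma teq2_mset: "mset L = mset L' \<Longrightarrow> set L \<subseteq> P \<times> Q \<Longrightarrow> teq2 P Q rP lQ Bs L L'"
  by (auto simp: teq2_iff_modeq intro: modeq_mset dest: mset_eq_setD)

lemma teq2_add_left: "p \<in> P \<Longrightarrow> p' \<in> P \<Longrightarrow> q \<in> Q \<Longrightarrow> p + p' \<in> P \<Longrightarrow>
    teq2 P Q rP lQ Bs [(p + p', q)] [(p, q), (p', q)]"
  unfolding teq2_iff_modeq by (auto intro!: modeq_generator3 simp: rel2_def)

lemma teq2_add_right: "p \<in> P \<Longrightarrow> q \<in> Q \<Longrightarrow> q' \<in> Q \<Longrightarrow> q + q' \<in> Q \<Longrightarrow>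
    teq2 P Q rP lQ Bs [(p, q + q')] [(p, q), (p, q')]"
  unfolding teq2_iff_modeq by (auto intro!: modeq_generator3 simp: rel2_def)

lemma teq2_balance: "b \<in> Bs \<Longrightarrow> p \<in> P \<Longrightarrow> q \<in> Q \<Longrightarrow> rP b p \<in> P \<Longrightarrow> lQ b q \<in> Q \<Longrightarrow>
    teq2 P Q rP lQ Bs [(rP b p, q)] [(p, lQ b q)]"
  unfolding teq2_iff_modeq by (auto intro!: modeq_generator simp: rel2_def)

lemma teq2_zero_left:
  assumes "(0::'p::ab_group_add) \<in> P" "q \<in> Q"
  shows "teq2 P Q rP lQ Bs [(0::'p, q)] []"
proof -
  have "teq2 P Q rP lQ Bs [(0 + 0, q)] [(0, q), (0, q)]" using assms by (intro teq2_add_left) auto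
  then show ?thesis
    using assms unfolding teq2_iff_modeq modeq_def by (auto simp: algebra_simps dest: gsub_uminus)
qed

lemma teq2_zero_right:
  assumes "p \<in> P" "(0::'q::ab_group_add) \<in> Q"
  shows "teq2 P Q rP lQ Bs [(p, 0::'q)] []"
proof -
  have "teq2 P Q rP lQ Bs [(p, 0 + 0)] [(p, 0), (p, 0)]" using assms by (intro teq2_add_right) auto
  then show ?thesis
    using assms unfolding teq2_iff_modeq modeq_def by (auto simp: algebra_simps dest: gsub_uminus)
qed

lemma teq2_sum_list_left:
  fixes g :: "'l \<Rightarrow> 'p::ab_group_add"
  assumes q: "q \<in> Q" and P0: "0 \<in> P" and Padd: "\<And>u v. u \<in> P \<Longrightarrow> v \<in> P \<Longrightarrow> u + v \<in> P"
    and g: "\<And>l. l \<in> set L \<Longrightarrow> g l \<in> P"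
  shows "teq2 P Q rP lQ Bs [(sum_list (map g L), q)] (map (\<lambda>l. (g l, q)) L)"
  using g
proof (induction L)
  case Nil
  then show ?case using teq2_zero_left[OF P0 q] by simp
next
  case (Cons l L)
  have S: "sum_list (map g L) \<in> P" using Cons.prems by (intro sum_list_closed[OF P0 Padd]) auto
  have "teq2 P Q rP lQ Bs [(g l + sum_list (map g L), q)] [(g l, q), (sum_list (map g L), q)]"
    using Cons.prems S q by (intro teq2_add_left) (auto simp: Padd)
  moreover have "teq2 P Q rP lQ Bs ([(g l, q)] @ [(sum_list (map g L), q)])
      ([(g l, q)] @ map (\<lambda>l. (g l, q)) L)"
    using Cons q by (intro teq2_append teq2_refl) auto
  ultimately show ?case by (auto intro: teq2_trans)
qed

lemma teq2_sum_right:
  fixes h :: "nat \<Rightarrow> 'q::ab_group_add"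
  assumes p: "p \<in> P" and Q0: "0 \<in> Q" and Qadd: "\<And>u v. u \<in> Q \<Longrightarrow> v \<in> Q \<Longrightarrow> u + v \<in> Q"
    and h: "\<And>j. j < n \<Longrightarrow> h j \<in> Q"
  shows "teq2 P Q rP lQ Bs [(p, \<Sum>j<n. h j)] (map (\<lambda>j. (p, h j)) [0..<n])"
  using h
proof (induction n)
  case 0
  then show ?case using teq2_zero_right[OF p Q0] by simp
next
  case (Suc n)
  have S: "(\<Sum>j<n. h j) \<in> Q" using Suc.prems by (intro sum_lessThan_closed[OF Q0 Qadd]) auto
  have "teq2 P Q rP lQ Bs [(p, (\<Sum>j<n. h j) + h n)] [(p, \<Sum>j<n. h j), (p, h n)]"
    using Suc.prems S p by (intro teq2_add_right) (auto simp: Qadd)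
  moreover have "teq2 P Q rP lQ Bs ([(p, \<Sum>j<n. h j)] @ [(p, h n)])
      (map (\<lambda>j. (p, h j)) [0..<n] @ [(p, h n)])"
    using Suc p by (intro teq2_append teq2_refl) auto
  ultimately show ?case by (auto intro: teq2_trans)
qed

lemma teq2_sum_list_eq:
  fixes \<phi> :: "'p::ab_group_add \<times> 'q::ab_group_add \<Rightarrow> 'm::ab_group_add"
  assumes "teq2 P Q rP lQ Bs L L'"
    and "\<And>p p' q. p \<in> P \<Longrightarrow> p' \<in> P \<Longrightarrow> q \<in> Q \<Longrightarrow> \<phi> (p + p', q) = \<phi> (p, q) + \<phi> (p', q)"
    and "\<And>p q q'. p \<in> P \<Longrightarrow> q \<in> Q \<Longrightarrow> q' \<in> Q \<Longrightarrow> \<phi> (p, q + q') = \<phi> (p, q) + \<phi> (p, q')"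
    and "\<And>b p q. b \<in> Bs \<Longrightarrow> p \<in> P \<Longrightarrow> q \<in> Q \<Longrightarrow> \<phi> (rP b p, q) = \<phi> (p, lQ b q)"
  shows "sum_list (map \<phi> L) = sum_list (map \<phi> L')"
proof (rule modeq_sum_list_eq[of "rel2 P Q rP lQ Bs"])
  show "modeq (rel2 P Q rP lQ Bs) L L'" using assms(1) by (simp add: teq2_iff_modeq)
  fix g assume "g \<in> rel2 P Q rP lQ Bs"
  then show "\<exists>Lp Ln. g = formal Lp - formal Ln \<and> sum_list (map \<phi> Lp) = sum_list (map \<phi> Ln)"
    unfolding rel2_def
  proof (elim UnE CollectE exE conjE)
    fix p p' q assume "g = delta (p + p', q) - delta (p, q) - delta (p', q)" "p \<in> P" "p' \<in> P" "q \<in> Q"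
    then show ?thesis using assms(2)
      by (intro exI[of _ "[(p + p', q)]"] exI[of _ "[(p, q), (p', q)]"]) (simp add: algebra_simps)
  next
    fix p q q' assume "g = delta (p, q + q') - delta (p, q) - delta (p, q')" "p \<in> P" "q \<in> Q" "q' \<in> Q"
    then show ?thesis using assms(3)
      by (intro exI[of _ "[(p, q + q')]"] exI[of _ "[(p, q), (p, q')]"]) (simp add: algebra_simps)
  next
    fix b p q assume "g = delta (rP b p, q) - delta (p, lQ b q)" "b \<in> Bs" "p \<in> P" "q \<in> Q"
    then show ?thesis using assms(4) by (intro exI[of _ "[(rP b p, q)]"] exI[of _ "[(p, lQ b q)]"]) simp
  qed
qed

lemma teq2_map_left:
  fixes f :: "'p::ab_group_add \<Rightarrow> 'p2::ab_group_add"
  assumes "teq2 P Q rP lQ Bs L L'"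
    and fP: "\<And>p. p \<in> P \<Longrightarrow> f p \<in> P'"
    and fadd: "\<And>p p'. p \<in> P \<Longrightarrow> p' \<in> P \<Longrightarrow> f (p + p') = f p + f p'"
    and fbal: "\<And>b p. b \<in> Bs \<Longrightarrow> p \<in> P \<Longrightarrow> f (rP b p) = rP' b (f p)"
  shows "teq2 P' Q rP' lQ Bs (map (\<lambda>(p, q). (f p, q)) L) (map (\<lambda>(p, q). (f p, q)) L')"
proof -
  let ?h = "\<lambda>(p, q). (f p, q)" and ?G' = "rel2 P' Q rP' lQ Bs"
  have "modeq ?G' (map ?h L) (map ?h L')"
  proof (rule modeq_map[of "rel2 P Q rP lQ Bs"])
    show "modeq (rel2 P Q rP lQ Bs) L L'" using assms(1) by (simp add: teq2_iff_modeq)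
    fix g assume "g \<in> rel2 P Q rP lQ Bs"
    from this[unfolded rel2_def]
    show "\<exists>Lp Ln. g = formal Lp - formal Ln \<and> modeq ?G' (map ?h Lp) (map ?h Ln)"
    proof (elim UnE CollectE exE conjE)
      fix p p' q assume "g = delta (p + p', q) - delta (p, q) - delta (p', q)" "p \<in> P" "p' \<in> P" "q \<in> Q"
      moreover from this have "modeq ?G' [(f p + f p', q)] [(f p, q), (f p', q)]"
        using fP by (intro modeq_generator3) (unfold rel2_def, blast)
      ultimately show ?thesis using fadd
        by (intro exI[of _ "[(p + p', q)]"] exI[of _ "[(p, q), (p', q)]"]) (simp add: algebra_simps)
    next
      fix p q q' assume "g = delta (p, q + q') - delta (p, q) - delta (p, q')" "p \<in> P" "q \<in> Q" "q' \<in> Q"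
      moreover from this have "modeq ?G' [(f p, q + q')] [(f p, q), (f p, q')]"
        using fP by (intro modeq_generator3) (unfold rel2_def, blast)
      ultimately show ?thesis
        by (intro exI[of _ "[(p, q + q')]"] exI[of _ "[(p, q), (p, q')]"]) (simp add: algebra_simps)
    next
      fix b p q assume "g = delta (rP b p, q) - delta (p, lQ b q)" "b \<in> Bs" "p \<in> P" "q \<in> Q"
      moreover from this have "modeq ?G' [(rP' b (f p), q)] [(f p, lQ b q)]"
        using fP by (intro modeq_generator) (unfold rel2_def, blast)
      ultimately show ?thesis using fbal
        by (intro exI[of _ "[(rP b p, q)]"] exI[of _ "[(p, lQ b q)]"]) simp
    qed
  qed
  moreover have "set (map ?h L) \<subseteq> P' \<times> Q" "set (map ?h L') \<subseteq> P' \<times> Q"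
    using assms(1) fP by (auto simp: teq2_iff_modeq)
  ultimately show ?thesis by (simp add: teq2_iff_modeq)
qed

lemma rel2_cong: "(\<And>b p. b \<in> Bs \<Longrightarrow> p \<in> P \<Longrightarrow> rP b p = rP' b p) \<Longrightarrow>
    rel2 P Q rP lQ Bs = rel2 P Q rP' lQ Bs"
  unfolding rel2_def by (intro arg_cong2[where f = "(\<union>)"] refl) (auto, metis+)

lemma teq3_iff_modeq: "teq3 P Q R rP lQ rQ lR Bs L L' \<longleftrightarrow>
    set L \<subseteq> P \<times> Q \<times> R \<and> set L' \<subseteq> P \<times> Q \<times> R \<and> modeq (rel3 P Q R rP lQ rQ lR Bs) L L'"
  by (simp add: teq3_def modeq_def)

lemma teq3_refl: "set L \<subseteq> P \<times> Q \<times> R \<Longrightarrow> teq3 P Q R rP lQ rQ lR Bs L L"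
  by (simp add: teq3_iff_modeq modeq_refl)

lemma teq3_sym: "teq3 P Q R rP lQ rQ lR Bs L L' \<Longrightarrow> teq3 P Q R rP lQ rQ lR Bs L' L"
  by (simp add: teq3_iff_modeq modeq_sym)

lemma teq3_trans: "teq3 P Q R rP lQ rQ lR Bs L L' \<Longrightarrow> teq3 P Q R rP lQ rQ lR Bs L' L'' \<Longrightarrow>
    teq3 P Q R rP lQ rQ lR Bs L L''"
  by (auto simp: teq3_iff_modeq intro: modeq_trans)

lemma teq3_append: "teq3 P Q R rP lQ rQ lR Bs L1 L1' \<Longrightarrow> teq3 P Q R rP lQ rQ lR Bs L2 L2' \<Longrightarrow>
    teq3 P Q R rP lQ rQ lR Bs (L1 @ L2) (L1' @ L2')"
  by (auto simp: teq3_iff_modeq intro: modeq_append)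

lemma teq3_concat: "(\<And>i. i \<in> set I \<Longrightarrow> teq3 P Q R rP lQ rQ lR Bs (f i) (g i)) \<Longrightarrow>
    teq3 P Q R rP lQ rQ lR Bs (concat (map f I)) (concat (map g I))"
  by (induction I) (auto intro: teq3_append teq3_refl)

lemma teq3_add_middle: "p \<in> P \<Longrightarrow> q \<in> Q \<Longrightarrow> q' \<in> Q \<Longrightarrow> r \<in> R \<Longrightarrow> q + q' \<in> Q \<Longrightarrow>
    teq3 P Q R rP lQ rQ lR Bs [(p, q + q', r)] [(p, q, r), (p, q', r)]"
  unfolding teq3_iff_modeq by (auto intro!: modeq_generator3) (unfold rel3_def, blast)

lemma teq3_balance_left: "b \<in> Bs \<Longrightarrow> p \<in> P \<Longrightarrow> q \<in> Q \<Longrightarrow> r \<in> R \<Longrightarrow> rP b p \<in> P \<Longrightarrow> lQ b q \<in> Q \<Longrightarrow>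
    teq3 P Q R rP lQ rQ lR Bs [(rP b p, q, r)] [(p, lQ b q, r)]"
  unfolding teq3_iff_modeq by (auto intro!: modeq_generator) (unfold rel3_def, blast)

lemma teq3_zero_middle:
  assumes "p \<in> P" "(0::'q::ab_group_add) \<in> Q" "r \<in> R"
  shows "teq3 P Q R rP lQ rQ lR Bs [(p, 0::'q, r)] []"
proof -
  have "teq3 P Q R rP lQ rQ lR Bs [(p, 0 + 0, r)] [(p, 0, r), (p, 0, r)]"
    using assms by (intro teq3_add_middle) auto
  then show ?thesis
    using assms unfolding teq3_iff_modeq modeq_def by (auto simp: algebra_simps dest: gsub_uminus)
qed

lemma teq3_sum_middle:
  fixes h :: "nat \<Rightarrow> 'q::ab_group_add"
  assumes p: "p \<in> P" and r: "r \<in> R"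
    and Q0: "0 \<in> Q" and Qadd: "\<And>u v. u \<in> Q \<Longrightarrow> v \<in> Q \<Longrightarrow> u + v \<in> Q"
    and h: "\<And>j. j < n \<Longrightarrow> h j \<in> Q"
  shows "teq3 P Q R rP lQ rQ lR Bs [(p, \<Sum>j<n. h j, r)] (map (\<lambda>j. (p, h j, r)) [0..<n])"
  using h
proof (induction n)
  case 0
  then show ?case using teq3_zero_middle[OF p Q0 r] by simp
next
  case (Suc n)
  have S: "(\<Sum>j<n. h j) \<in> Q" using Suc.prems by (intro sum_lessThan_closed[OF Q0 Qadd]) auto
  have "teq3 P Q R rP lQ rQ lR Bs [(p, (\<Sum>j<n. h j) + h n, r)] [(p, \<Sum>j<n. h j, r), (p, h n, r)]"
    using Suc.prems S p r by (intro teq3_add_middle) (auto simp: Qadd)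
  moreover have "teq3 P Q R rP lQ rQ lR Bs ([(p, \<Sum>j<n. h j, r)] @ [(p, h n, r)])
      (map (\<lambda>j. (p, h j, r)) [0..<n] @ [(p, h n, r)])"
    using Suc p r by (intro teq3_append teq3_refl) auto
  ultimately show ?case by (auto intro: teq3_trans)
qed

lemma teq3_sum_list_eq:
  fixes \<phi> :: "'p::ab_group_add \<times> 'q::ab_group_add \<times> 'r::ab_group_add \<Rightarrow> 'm::ab_group_add"
  assumes "teq3 P Q R rP lQ rQ lR Bs L L'"
    and "\<And>p p' q r. p \<in> P \<Longrightarrow> p' \<in> P \<Longrightarrow> q \<in> Q \<Longrightarrow> r \<in> R \<Longrightarrow>
      \<phi> (p + p', q, r) = \<phi> (p, q, r) + \<phi> (p', q, r)"
    and "\<And>p q q' r. p \<in> P \<Longrightarrow> q \<in> Q \<Longrightarrow> q' \<in> Q \<Longrightarrow> r \<in> R \<Longrightarrow>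
      \<phi> (p, q + q', r) = \<phi> (p, q, r) + \<phi> (p, q', r)"
    and "\<And>p q r r'. p \<in> P \<Longrightarrow> q \<in> Q \<Longrightarrow> r \<in> R \<Longrightarrow> r' \<in> R \<Longrightarrow>
      \<phi> (p, q, r + r') = \<phi> (p, q, r) + \<phi> (p, q, r')"
    and "\<And>b p q r. b \<in> Bs \<Longrightarrow> p \<in> P \<Longrightarrow> q \<in> Q \<Longrightarrow> r \<in> R \<Longrightarrow> \<phi> (rP b p, q, r) = \<phi> (p, lQ b q, r)"
    and "\<And>b p q r. b \<in> Bs \<Longrightarrow> p \<in> P \<Longrightarrow> q \<in> Q \<Longrightarrow> r \<in> R \<Longrightarrow> \<phi> (p, rQ b q, r) = \<phi> (p, q, lR b r)"
  shows "sum_list (map \<phi> L) = sum_list (map \<phi> L')"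
proof (rule modeq_sum_list_eq[of "rel3 P Q R rP lQ rQ lR Bs"])
  show "modeq (rel3 P Q R rP lQ rQ lR Bs) L L'" using assms(1) by (simp add: teq3_iff_modeq)
  fix g assume "g \<in> rel3 P Q R rP lQ rQ lR Bs"
  from this[unfolded rel3_def]
  show "\<exists>Lp Ln. g = formal Lp - formal Ln \<and> sum_list (map \<phi> Lp) = sum_list (map \<phi> Ln)"
  proof (elim UnE CollectE exE conjE)
    fix p p' q r assume "g = delta (p + p', q, r) - delta (p, q, r) - delta (p', q, r)"
      "p \<in> P" "p' \<in> P" "q \<in> Q" "r \<in> R"
    then show ?thesis using assms(2)
      by (intro exI[of _ "[(p + p', q, r)]"] exI[of _ "[(p, q, r), (p', q, r)]"]) (simp add: algebra_simps)
  next
    fix p q q' r assume "g = delta (p, q + q', r) - delta (p, q, r) - delta (p, q', r)"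
      "p \<in> P" "q \<in> Q" "q' \<in> Q" "r \<in> R"
    then show ?thesis using assms(3)
      by (intro exI[of _ "[(p, q + q', r)]"] exI[of _ "[(p, q, r), (p, q', r)]"]) (simp add: algebra_simps)
  next
    fix p q r r' assume "g = delta (p, q, r + r') - delta (p, q, r) - delta (p, q, r')"
      "p \<in> P" "q \<in> Q" "r \<in> R" "r' \<in> R"
    then show ?thesis using assms(4)
      by (intro exI[of _ "[(p, q, r + r')]"] exI[of _ "[(p, q, r), (p, q, r')]"]) (simp add: algebra_simps)
  next
    fix b p q r assume "g = delta (rP b p, q, r) - delta (p, lQ b q, r)" "b \<in> Bs" "p \<in> P" "q \<in> Q" "r \<in> R"
    then show ?thesis using assms(5)
      by (intro exI[of _ "[(rP b p, q, r)]"] exI[of _ "[(p, lQ b q, r)]"]) simp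
  next
    fix b p q r assume "g = delta (p, rQ b q, r) - delta (p, q, lR b r)" "b \<in> Bs" "p \<in> P" "q \<in> Q" "r \<in> R"
    then show ?thesis using assms(6)
      by (intro exI[of _ "[(p, rQ b q, r)]"] exI[of _ "[(p, q, lR b r)]"]) simp
  qed
qed

lemma ksubmod_zero: "ksubmod s S \<Longrightarrow> 0 \<in> S"
  by (simp add: ksubmod_def)

lemma ksubmod_add: "ksubmod s S \<Longrightarrow> u \<in> S \<Longrightarrow> v \<in> S \<Longrightarrow> u + v \<in> S"
  by (simp add: ksubmod_def)

lemma ksubmod_scale: "ksubmod s S \<Longrightarrow> u \<in> S \<Longrightarrow> s c u \<in> S"
  by (simp add: ksubmod_def)

lemma ksubmod_sum_list: "ksubmod s S \<Longrightarrow> (\<And>l. l \<in> set L \<Longrightarrow> g l \<in> S) \<Longrightarrow> sum_list (map g L) \<in> S"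
  by (rule sum_list_closed) (auto simp: ksubmod_zero ksubmod_add)

lemma rmodD:
  assumes "rmod D sM Mc act"
  shows "module sM" and "ksubmod sM (Mc x y)"
    and "m \<in> Mc x y \<Longrightarrow> a \<in> Ah D y z \<Longrightarrow> act x y z m a \<in> Mc x z"
    and "m \<in> Mc x y \<Longrightarrow> m' \<in> Mc x y \<Longrightarrow> a \<in> Ah D y z \<Longrightarrow>
      act x y z (m + m') a = act x y z m a + act x y z m' a"
    and "m \<in> Mc x y \<Longrightarrow> a \<in> Ah D y z \<Longrightarrow> a' \<in> Ah D y z \<Longrightarrow>
      act x y z m (a + a') = act x y z m a + act x y z m a'"
    and "m \<in> Mc x y \<Longrightarrow> a \<in> Ah D y z \<Longrightarrow> act x y z (sM c m) a = sM c (act x y z m a)"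
    and "m \<in> Mc x y \<Longrightarrow> a \<in> Ah D y z \<Longrightarrow> act x y z m (sA D c a) = sM c (act x y z m a)"
    and "m \<in> Mc x y \<Longrightarrow> a \<in> Ah D y z \<Longrightarrow> b \<in> Ah D z w \<Longrightarrow>
      act x z w (act x y z m a) b = act x y w m (cmp D y z w a b)"
    and "m \<in> Mc x y \<Longrightarrow> act x y y m (one D y) = m"
  using assms unfolding rmod_def by (simp_all (no_asm_simp))

lemma rmod_act_sum_list:
  assumes r: "rmod D sM Mc act" and g: "\<And>l. l \<in> set L \<Longrightarrow> g l \<in> Mc x y" and a: "a \<in> Ah D y z"
  shows "act x y z (sum_list (map g L)) a = sum_list (map (\<lambda>l. act x y z (g l) a) L)"
  using rmodD(2)[OF r, of x y] by (intro additive_on_sum_list[where S = "Mc x y"])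
    (auto simp: ksubmod_zero ksubmod_add rmodD(4)[OF r] a g)

lemma rcmodD:
  assumes "rcmod D sM Mc \<rho>"
  shows "module sM" and "ksubmod sM (Mc x y)"
    and "m \<in> Mc x y \<Longrightarrow> f \<in> EndC D x y z \<Longrightarrow> \<rho> x y z m f \<in> Mc x z"
    and "m \<in> Mc x y \<Longrightarrow> m' \<in> Mc x y \<Longrightarrow> f \<in> EndC D x y z \<Longrightarrow>
      \<rho> x y z (m + m') f = \<rho> x y z m f + \<rho> x y z m' f"
    and "m \<in> Mc x y \<Longrightarrow> f \<in> EndC D x y z \<Longrightarrow> g \<in> EndC D x y z \<Longrightarrow>
      \<rho> x y z m (cadd D x y f g) = \<rho> x y z m f + \<rho> x y z m g"
    and "m \<in> Mc x y \<Longrightarrow> f \<in> EndC D x y z \<Longrightarrow> \<rho> x y z (sM c m) f = sM c (\<rho> x y z m f)"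
    and "m \<in> Mc x y \<Longrightarrow> f \<in> EndC D x y z \<Longrightarrow> \<rho> x y z m (csc D x y c f) = sM c (\<rho> x y z m f)"
    and "m \<in> Mc x y \<Longrightarrow> f \<in> EndC D x y z \<Longrightarrow> g \<in> EndC D x z w \<Longrightarrow>
      \<rho> x z w (\<rho> x y z m f) g = \<rho> x y w m (ccomp D x y f g)"
    and "m \<in> Mc x y \<Longrightarrow> \<rho> x y y m (cunit D x y) = m"
  using assms unfolding rcmod_def by (simp_all (no_asm_simp))

lemma descentD:
  assumes "descent D sM Mc act \<sigma>"
  shows "rmod D sM Mc act"
    and "m \<in> Mc x y \<Longrightarrow> set (\<sigma> x y m) \<subseteq> Mc x x \<times> Ah D x y"
    and "m \<in> Mc x y \<Longrightarrow> m' \<in> Mc x y \<Longrightarrow> tMA D Mc act x y (\<sigma> x y (m + m')) (\<sigma> x y m @ \<sigma> x y m')"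
    and "m \<in> Mc x y \<Longrightarrow> tMA D Mc act x y (\<sigma> x y (sM c m)) (map (\<lambda>(p, a). (sM c p, a)) (\<sigma> x y m))"
    and "m \<in> Mc x y \<Longrightarrow> a \<in> Ah D y z \<Longrightarrow>
      tMA D Mc act x z (\<sigma> x z (act x y z m a)) (map (\<lambda>(p, a'). (p, cmp D x y z a' a)) (\<sigma> x y m))"
    and "m \<in> Mc x y \<Longrightarrow>
      tMAA D Mc act x y (concat (map (\<lambda>(p, a). map (\<lambda>(q, a'). (q, a', a)) (\<sigma> x x p)) (\<sigma> x y m)))
        (map (\<lambda>(p, a). (p, one D x, a)) (\<sigma> x y m))"
    and "m \<in> Mc x y \<Longrightarrow> sum_list (map (\<lambda>(p, a). act x x y p a) (\<sigma> x y m)) = m"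
  using assms unfolding descent_def by (simp_all (no_asm_simp))

lemma tMA_sym: "tMA D Mc act x y L L' \<Longrightarrow> tMA D Mc act x y L' L"
  unfolding tMA_def by (rule teq2_sym)

lemma tMA_trans [trans]: "tMA D Mc act x y L L' \<Longrightarrow> tMA D Mc act x y L' L'' \<Longrightarrow> tMA D Mc act x y L L''"
  unfolding tMA_def by (rule teq2_trans)

lemma tMA_concat: "(\<And>i. i \<in> set I \<Longrightarrow> tMA D Mc act x y (f i) (g i)) \<Longrightarrow>
    tMA D Mc act x y (concat (map f I)) (concat (map g I))"
  unfolding tMA_def by (rule teq2_concat)

lemma tMA_mset: "mset L = mset L' \<Longrightarrow> set L \<subseteq> Mc x x \<times> Ah D x y \<Longrightarrow> tMA D Mc act x y L L'"
  unfolding tMA_def by (rule teq2_mset)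

lemma tMA_sum_list_left:
  assumes "ksubmod sM (Mc x x)" and "q \<in> Ah D x y" and "\<And>l. l \<in> set L \<Longrightarrow> g l \<in> Mc x x"
  shows "tMA D Mc act x y [(sum_list (map g L), q)] (map (\<lambda>l. (g l, q)) L)"
  unfolding tMA_def using assms
  by (intro teq2_sum_list_left) (auto simp: ksubmod_zero ksubmod_add)

lemma tMA_cong:
  assumes "\<And>m b. m \<in> Mc x x \<Longrightarrow> b \<in> Bc D x \<Longrightarrow> act x x x m (fi D x b) = act' x x x m (fi D x b)"
  shows "tMA D Mc act x y = tMA D Mc act' x y"
  unfolding tMA_def teq2_def using assms by (simp cong: rel2_cong)

lemma tMAA_sym: "tMAA D Mc act x y L L' \<Longrightarrow> tMAA D Mc act x y L' L"
  unfolding tMAA_def by (rule teq3_sym)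

lemma tMAA_trans [trans]: "tMAA D Mc act x y L L' \<Longrightarrow> tMAA D Mc act x y L' L'' \<Longrightarrow> tMAA D Mc act x y L L''"
  unfolding tMAA_def by (rule teq3_trans)

lemma tMAA_concat: "(\<And>i. i \<in> set I \<Longrightarrow> tMAA D Mc act x y (f i) (g i)) \<Longrightarrow>
    tMAA D Mc act x y (concat (map f I)) (concat (map g I))"
  unfolding tMAA_def by (rule teq3_concat)

section \<open>A dual basis for each hom-module\<close>

definition is_dual_basis ::
    "('k, 'x, 'a::ab_group_add, 'b::ab_group_add) kdata \<Rightarrow> 'x \<Rightarrow> 'x \<Rightarrow> nat \<Rightarrow> (nat \<Rightarrow> 'a) \<Rightarrow> (nat \<Rightarrow> 'a \<Rightarrow> 'b) \<Rightarrow> bool"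
  where "is_dual_basis D x y n e \<phi> \<longleftrightarrow> (\<forall>j<n. e j \<in> Ah D x y) \<and> (\<forall>j<n. Blin_dual D x y (\<phi> j)) \<and>
    (\<forall>a\<in>Ah D x y. a = (\<Sum>j<n. lB D x y (\<phi> j a) (e j)))"

lemma fg_projective_iff_dual_basis: "fg_projective D x y \<longleftrightarrow> (\<exists>n e \<phi>. is_dual_basis D x y n e \<phi>)"
  by (simp add: fg_projective_def is_dual_basis_def)

locale dual_basis =
  fixes D :: "('k::comm_ring_1, 'x, 'a::ab_group_add, 'b::ab_group_add) kdata"
    and N :: "'x \<Rightarrow> 'x \<Rightarrow> nat" and E :: "'x \<Rightarrow> 'x \<Rightarrow> nat \<Rightarrow> 'a" and Ph :: "'x \<Rightarrow> 'x \<Rightarrow> nat \<Rightarrow> 'a \<Rightarrow> 'b"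
  assumes cat: "klin_cat D" and ifun: "xfunctor D"
    and basis: "\<And>x y. is_dual_basis D x y (N x y) (E x y) (Ph x y)"
begin

lemma E_closed: "j < N x y \<Longrightarrow> E x y j \<in> Ah D x y"
  using basis by (simp add: is_dual_basis_def)

lemma dual_basis_expansion: "a \<in> Ah D x y \<Longrightarrow> a = (\<Sum>j<N x y. lB D x y (Ph x y j a) (E x y j))"
  using basis by (simp add: is_dual_basis_def)

lemma Ph_dual: "j < N x y \<Longrightarrow> Blin_dual D x y (Ph x y j)"
  using basis by (simp add: is_dual_basis_def)

lemma Ah_zero: "0 \<in> Ah D x y"
  using cat by (simp add: klin_cat_def ksubmod_def)

lemma Ah_add: "a \<in> Ah D x y \<Longrightarrow> a' \<in> Ah D x y \<Longrightarrow> a + a' \<in> Ah D x y"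
  using cat by (simp add: klin_cat_def ksubmod_def)

lemma cmp_closed: "a \<in> Ah D x y \<Longrightarrow> b \<in> Ah D y z \<Longrightarrow> cmp D x y z a b \<in> Ah D x z"
  using cat by (simp add: klin_cat_def)

lemma cmp_add_left: "a \<in> Ah D x y \<Longrightarrow> a' \<in> Ah D x y \<Longrightarrow> b \<in> Ah D y z \<Longrightarrow>
    cmp D x y z (a + a') b = cmp D x y z a b + cmp D x y z a' b"
  using cat by (simp add: klin_cat_def)

lemma cmp_add_right: "a \<in> Ah D x y \<Longrightarrow> b \<in> Ah D y z \<Longrightarrow> b' \<in> Ah D y z \<Longrightarrow>
    cmp D x y z a (b + b') = cmp D x y z a b + cmp D x y z a b'"
  using cat by (simp add: klin_cat_def)

lemma cmp_zero_right: "a \<in> Ah D x y \<Longrightarrow> cmp D x y z a 0 = 0"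
  using cmp_add_right[OF _ Ah_zero Ah_zero, of a x y z] by simp

lemma cmp_scale_right: "a \<in> Ah D x y \<Longrightarrow> b \<in> Ah D y z \<Longrightarrow>
    cmp D x y z a (sA D c b) = sA D c (cmp D x y z a b)"
  using cat by (simp add: klin_cat_def)

lemma cmp_assoc: "a \<in> Ah D x y \<Longrightarrow> b \<in> Ah D y z \<Longrightarrow> c \<in> Ah D z w \<Longrightarrow>
    cmp D x z w (cmp D x y z a b) c = cmp D x y w a (cmp D y z w b c)"
  using cat by (simp add: klin_cat_def)

lemma one_closed: "one D x \<in> Ah D x x"
  using cat by (simp add: klin_cat_def)

lemma cmp_one_left: "a \<in> Ah D x y \<Longrightarrow> cmp D x x y (one D x) a = a"
  using cat by (simp add: klin_cat_def)

lemma cmp_one_right: "a \<in> Ah D x y \<Longrightarrow> cmp D x y y a (one D y) = a"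
  using cat by (simp add: klin_cat_def)

lemma fi_closed: "b \<in> Bc D x \<Longrightarrow> fi D x b \<in> Ah D x x"
  using ifun by (simp add: xfunctor_def)

lemma fi_add: "b \<in> Bc D x \<Longrightarrow> b' \<in> Bc D x \<Longrightarrow> fi D x (b + b') = fi D x b + fi D x b'"
  using ifun by (simp add: xfunctor_def)

lemma fi_mult: "b \<in> Bc D x \<Longrightarrow> b' \<in> Bc D x \<Longrightarrow>
    fi D x (bm D x b b') = cmp D x x x (fi D x b) (fi D x b')"
  using ifun by (simp add: xfunctor_def)

lemma lB_closed: "b \<in> Bc D x \<Longrightarrow> a \<in> Ah D x y \<Longrightarrow> lB D x y b a \<in> Ah D x y"
  by (simp add: lB_def cmp_closed fi_closed)

lemma Ph_closed: "j < N x y \<Longrightarrow> a \<in> Ah D x y \<Longrightarrow> Ph x y j a \<in> Bc D x"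
  using Ph_dual by (simp add: Blin_dual_def)

lemma Ph_add: "j < N x y \<Longrightarrow> a \<in> Ah D x y \<Longrightarrow> a' \<in> Ah D x y \<Longrightarrow>
    Ph x y j (a + a') = Ph x y j a + Ph x y j a'"
  using Ph_dual by (simp add: Blin_dual_def)

lemma Ph_lB: "j < N x y \<Longrightarrow> b \<in> Bc D x \<Longrightarrow> a \<in> Ah D x y \<Longrightarrow>
    Ph x y j (lB D x y b a) = bm D x b (Ph x y j a)"
  using Ph_dual by (simp add: Blin_dual_def)

section \<open>The endocluster\<close>

definition coord :: "'x \<Rightarrow> 'x \<Rightarrow> nat \<Rightarrow> 'a \<Rightarrow> 'a" where
  "coord x y j = restrict (\<lambda>c. fi D x (Ph x y j c)) (Ah D x y)"

definition rmult :: "'x \<Rightarrow> 'x \<Rightarrow> 'x \<Rightarrow> 'a \<Rightarrow> 'a \<Rightarrow> 'a" where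
  "rmult x y z a = restrict (\<lambda>c. cmp D x y z c a) (Ah D x y)"

definition cluster_zero :: "'x \<Rightarrow> 'x \<Rightarrow> 'a \<Rightarrow> 'a" where
  "cluster_zero x y = restrict (\<lambda>c. 0) (Ah D x y)"

definition cluster_sum :: "'x \<Rightarrow> 'x \<Rightarrow> (nat \<Rightarrow> 'a \<Rightarrow> 'a) \<Rightarrow> nat \<Rightarrow> 'a \<Rightarrow> 'a" where
  "cluster_sum x y F n = restrict (\<lambda>c. \<Sum>j<n. F j c) (Ah D x y)"

lemma coord_apply: "c \<in> Ah D x y \<Longrightarrow> coord x y j c = fi D x (Ph x y j c)"
  by (simp add: coord_def)

lemma rmult_apply: "c \<in> Ah D x y \<Longrightarrow> rmult x y z a c = cmp D x y z c a"
  by (simp add: rmult_def)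

lemma cluster_sum_0: "cluster_sum x y F 0 = cluster_zero x y"
  by (simp add: cluster_sum_def cluster_zero_def)

lemma cluster_sum_Suc: "cluster_sum x y F (Suc n) = cadd D x y (cluster_sum x y F n) (F n)"
  by (auto simp: cluster_sum_def cadd_def fun_eq_iff)

lemma EndC_closed: "f \<in> EndC D x y z \<Longrightarrow> a \<in> Ah D x y \<Longrightarrow> f a \<in> Ah D x z"
  by (auto simp: EndC_def)

lemma EndC_add: "f \<in> EndC D x y z \<Longrightarrow> a \<in> Ah D x y \<Longrightarrow> a' \<in> Ah D x y \<Longrightarrow>
    f (a + a') = f a + f a'"
  by (auto simp: EndC_def)

lemma EndC_lB: "f \<in> EndC D x y z \<Longrightarrow> b \<in> Bc D x \<Longrightarrow> a \<in> Ah D x y \<Longrightarrow>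
    f (lB D x y b a) = lB D x z b (f a)"
  by (auto simp: EndC_def)

lemma EndC_outside: "f \<in> EndC D x y z \<Longrightarrow> a \<notin> Ah D x y \<Longrightarrow> f a = undefined"
  by (auto simp: EndC_def extensional_def)

lemma EndC_sum: "f \<in> EndC D x y z \<Longrightarrow> (\<And>j. j < (n::nat) \<Longrightarrow> g j \<in> Ah D x y) \<Longrightarrow>
    f (\<Sum>j<n. g j) = (\<Sum>j<n. f (g j))"
  by (rule additive_on_sum[where S = "Ah D x y"]) (auto simp: Ah_zero Ah_add EndC_add)

lemma EndC_fi: "f \<in> EndC D x x z \<Longrightarrow> b \<in> Bc D x \<Longrightarrow> f (fi D x b) = cmp D x x z (fi D x b) (f (one D x))"
  using EndC_lB[of f x x z b "one D x"] by (simp add: lB_def cmp_one_right fi_closed one_closed)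

lemma coord_EndC: "j < N x y \<Longrightarrow> coord x y j \<in> EndC D x y x"
  unfolding EndC_def
proof (intro CollectI conjI ballI)
  assume j: "j < N x y"
  show "coord x y j \<in> Ah D x y \<rightarrow> Ah D x x" using j by (auto simp: coord_def fi_closed Ph_closed)
  show "coord x y j \<in> extensional (Ah D x y)" by (simp add: coord_def)
  fix a a' assume "a \<in> Ah D x y" "a' \<in> Ah D x y"
  then show "coord x y j (a + a') = coord x y j a + coord x y j a'"
    using j by (simp add: coord_def Ah_add Ph_add fi_add Ph_closed)
next
  fix b a assume "j < N x y" "b \<in> Bc D x" "a \<in> Ah D x y"
  then show "coord x y j (lB D x y b a) = lB D x x b (coord x y j a)"
    by (simp add: coord_def lB_closed Ph_lB fi_mult Ph_closed) (simp add: lB_def)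
qed

lemma rmult_EndC: "a \<in> Ah D y z \<Longrightarrow> rmult x y z a \<in> EndC D x y z"
  unfolding EndC_def
proof (intro CollectI conjI ballI)
  assume a: "a \<in> Ah D y z"
  show "rmult x y z a \<in> Ah D x y \<rightarrow> Ah D x z" using a by (auto simp: rmult_def cmp_closed)
  show "rmult x y z a \<in> extensional (Ah D x y)" by (simp add: rmult_def)
  fix c c' assume "c \<in> Ah D x y" "c' \<in> Ah D x y"
  then show "rmult x y z a (c + c') = rmult x y z a c + rmult x y z a c'"
    using a by (simp add: rmult_def Ah_add cmp_add_left)
next
  fix b c assume "a \<in> Ah D y z" "b \<in> Bc D x" "c \<in> Ah D x y"
  then show "rmult x y z a (lB D x y b c) = lB D x z b (rmult x y z a c)"
    by (simp add: rmult_def lB_closed) (simp add: lB_def cmp_assoc fi_closed)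
qed

lemma cluster_zero_EndC: "cluster_zero x y \<in> EndC D x y z"
  unfolding EndC_def cluster_zero_def
  by (auto simp: Ah_zero Ah_add lB_closed) (simp add: lB_def cmp_zero_right fi_closed)

lemma cadd_EndC:
  assumes f: "f \<in> EndC D x y z" and g: "g \<in> EndC D x y z"
  shows "cadd D x y f g \<in> EndC D x y z"
  unfolding EndC_def
proof (intro CollectI conjI ballI)
  show "cadd D x y f g \<in> Ah D x y \<rightarrow> Ah D x z"
    using f g by (auto simp: cadd_def Ah_add EndC_closed)
  show "cadd D x y f g \<in> extensional (Ah D x y)" by (simp add: cadd_def)
  fix a a' assume a: "a \<in> Ah D x y" "a' \<in> Ah D x y"
  then show "cadd D x y f g (a + a') = cadd D x y f g a + cadd D x y f g a'"
    using EndC_add[OF f a] EndC_add[OF g a] by (simp add: cadd_def Ah_add algebra_simps)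
next
  fix b a assume b: "b \<in> Bc D x" and a: "a \<in> Ah D x y"
  then show "cadd D x y f g (lB D x y b a) = lB D x z b (cadd D x y f g a)"
    using EndC_lB[OF f b a] EndC_lB[OF g b a]
    by (simp add: cadd_def lB_closed)
       (simp add: lB_def cmp_add_right fi_closed EndC_closed[OF f a] EndC_closed[OF g a])
qed

lemma ccomp_EndC:
  assumes f: "f \<in> EndC D x y z" and g: "g \<in> EndC D x z w"
  shows "ccomp D x y f g \<in> EndC D x y w"
  unfolding EndC_def
proof (intro CollectI conjI ballI)
  show "ccomp D x y f g \<in> Ah D x y \<rightarrow> Ah D x w"
    using EndC_closed[OF f] EndC_closed[OF g] by (auto simp: ccomp_def)
  show "ccomp D x y f g \<in> extensional (Ah D x y)" by (simp add: ccomp_def)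
  fix a a' assume a: "a \<in> Ah D x y" and a': "a' \<in> Ah D x y"
  show "ccomp D x y f g (a + a') = ccomp D x y f g a + ccomp D x y f g a'"
    using EndC_add[OF f a a'] EndC_add[OF g EndC_closed[OF f a] EndC_closed[OF f a']] Ah_add[OF a a']
    by (simp add: ccomp_def a a')
next
  fix b a assume b: "b \<in> Bc D x" and a: "a \<in> Ah D x y"
  show "ccomp D x y f g (lB D x y b a) = lB D x w b (ccomp D x y f g a)"
    using EndC_lB[OF f b a] EndC_lB[OF g b EndC_closed[OF f a]] lB_closed[OF b a]
    by (simp add: ccomp_def a)
qed

lemma cunit_EndC: "cunit D x y \<in> EndC D x y y"
  unfolding EndC_def cunit_def by (auto simp: Ah_add lB_closed)

lemma cluster_sum_EndC: "(\<And>j. j < (n::nat) \<Longrightarrow> F j \<in> EndC D x y z) \<Longrightarrow> cluster_sum x y F n \<in> EndC D x y z"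
  by (induction n) (auto simp: cluster_sum_0 cluster_sum_Suc cluster_zero_EndC cadd_EndC)

lemma rmult_add: "a \<in> Ah D y z \<Longrightarrow> a' \<in> Ah D y z \<Longrightarrow>
    rmult x y z (a + a') = cadd D x y (rmult x y z a) (rmult x y z a')"
  by (auto simp: rmult_def cadd_def fun_eq_iff cmp_add_right)

lemma rmult_scale: "a \<in> Ah D y z \<Longrightarrow> rmult x y z (sA D c a) = csc D x y c (rmult x y z a)"
  by (auto simp: rmult_def csc_def fun_eq_iff cmp_scale_right)

lemma ccomp_rmult: "a \<in> Ah D y z \<Longrightarrow> b \<in> Ah D z w \<Longrightarrow>
    ccomp D x y (rmult x y z a) (rmult x z w b) = rmult x y w (cmp D y z w a b)"
  by (auto simp: rmult_def ccomp_def fun_eq_iff cmp_assoc cmp_closed)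

lemma rmult_one: "rmult x y y (one D y) = cunit D x y"
  by (auto simp: rmult_def cunit_def fun_eq_iff cmp_one_right)

lemma EndC_expansion:
  assumes f: "f \<in> EndC D x y z"
  shows "f = cluster_sum x y (\<lambda>j. ccomp D x y (coord x y j) (rmult x x z (f (E x y j)))) (N x y)"
proof
  fix c
  show "f c = cluster_sum x y (\<lambda>j. ccomp D x y (coord x y j) (rmult x x z (f (E x y j)))) (N x y) c"
  proof (cases "c \<in> Ah D x y")
    case True
    have "f c = f (\<Sum>j<N x y. lB D x y (Ph x y j c) (E x y j))"
      using dual_basis_expansion[OF True] by simp
    also have "\<dots> = (\<Sum>j<N x y. f (lB D x y (Ph x y j c) (E x y j)))"
      by (rule EndC_sum[OF f]) (simp add: lB_closed Ph_closed E_closed True)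
    also have "\<dots> = (\<Sum>j<N x y. cmp D x x z (fi D x (Ph x y j c)) (f (E x y j)))"
      by (rule sum.cong) (use EndC_lB[OF f Ph_closed[OF _ True] E_closed] in \<open>auto simp: lB_def\<close>)
    finally show ?thesis
      using True by (simp add: cluster_sum_def ccomp_def coord_apply rmult_apply fi_closed Ph_closed)
  next
    case False
    then show ?thesis using EndC_outside[OF f] by (simp add: cluster_sum_def)
  qed
qed

lemma rcmod_cluster_zero:
  assumes r: "rcmod D sM Mc \<rho>" and m: "m \<in> Mc x y"
  shows "\<rho> x y z m (cluster_zero x y) = 0"
proof -
  have "cadd D x y (cluster_zero x y) (cluster_zero x y) = cluster_zero x y"
    by (auto simp: cadd_def cluster_zero_def fun_eq_iff)
  then have "\<rho> x y z m (cluster_zero x y) = \<rho> x y z m (cluster_zero x y) + \<rho> x y z m (cluster_zero x y)"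
    using rcmodD(5)[OF r m cluster_zero_EndC cluster_zero_EndC] by simp
  then show ?thesis by simp
qed

lemma rcmod_cluster_sum:
  assumes r: "rcmod D sM Mc \<rho>" and m: "m \<in> Mc x y"
    and F: "\<And>j. j < (n::nat) \<Longrightarrow> F j \<in> EndC D x y z"
  shows "\<rho> x y z m (cluster_sum x y F n) = (\<Sum>j<n. \<rho> x y z m (F j))"
  using F by (induction n)
    (auto simp: cluster_sum_0 cluster_sum_Suc rcmod_cluster_zero[OF r m] rcmodD(5)[OF r m] cluster_sum_EndC)

lemma rcmod_expansion:
  assumes r: "rcmod D sM Mc \<rho>" and m: "m \<in> Mc x y" and f: "f \<in> EndC D x y z"
  shows "\<rho> x y z m f =
    (\<Sum>j<N x y. \<rho> x x z (\<rho> x y x m (coord x y j)) (rmult x x z (f (E x y j))))"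
proof -
  let ?F = "\<lambda>j. ccomp D x y (coord x y j) (rmult x x z (f (E x y j)))"
  have "\<rho> x y z m f = \<rho> x y z m (cluster_sum x y ?F (N x y))"
    using EndC_expansion[OF f] by simp
  also have "\<dots> = (\<Sum>j<N x y. \<rho> x y z m (?F j))"
    by (rule rcmod_cluster_sum[OF r m])
      (rule ccomp_EndC[OF coord_EndC rmult_EndC[OF EndC_closed[OF f E_closed]]])
  also have "\<dots> = (\<Sum>j<N x y. \<rho> x x z (\<rho> x y x m (coord x y j)) (rmult x x z (f (E x y j))))"
    by (rule sum.cong) (auto simp: rcmodD(8)[OF r m coord_EndC rmult_EndC] EndC_closed[OF f] E_closed)
  finally show ?thesis .
qed

section \<open>From descent data to right modules over the endocluster\<close>

text \<open>For \<open>f \<in> \<A>\<^sup>x\<^sub>y\<^sub>z\<close> the map \<open>(p, a) \<mapsto> p f(a)\<close> is \<open>B\<^sub>x\<close>-balanced, so \<open>m f\<close> does not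
  depend on the representative of \<open>\<sigma>(m)\<close>.\<close>

lemma tMA_sum_list_EndC_eq:
  assumes r: "rmod D sM Mc act" and f: "f \<in> EndC D x y z" and t: "tMA D Mc act x y L L'"
  shows "sum_list (map (\<lambda>(p, a). act x x z p (f a)) L) = sum_list (map (\<lambda>(p, a). act x x z p (f a)) L')"
  using t[unfolded tMA_def]
proof (rule teq2_sum_list_eq)
  fix b p q assume b: "b \<in> Bc D x" and p: "p \<in> Mc x x" and q: "q \<in> Ah D x y"
  have "act x x z (act x x x p (fi D x b)) (f q) = act x x z p (cmp D x x z (fi D x b) (f q))"
    by (rule rmodD(8)[OF r p fi_closed[OF b] EndC_closed[OF f q]])
  also have "\<dots> = act x x z p (f (lB D x y b q))" using EndC_lB[OF f b q] by (simp add: lB_def)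
  finally show "(case ((\<lambda>b m. act x x x m (fi D x b)) b p, q) of (p, a) \<Rightarrow> act x x z p (f a)) =
      (case (p, lB D x y b q) of (p, a) \<Rightarrow> act x x z p (f a))" by simp
qed (auto simp: rmodD(4,5)[OF r] EndC_closed[OF f] EndC_add[OF f])

lemma tMAA_sum_list_ccomp_eq:
  assumes r: "rmod D sM Mc act" and f: "f \<in> EndC D x y z" and g: "g \<in> EndC D x z w"
    and t: "tMAA D Mc act x y L L'"
  defines "\<phi> \<equiv> \<lambda>(q, a', a). act x x w q (g (cmp D x x z a' (f a)))"
  shows "sum_list (map \<phi> L) = sum_list (map \<phi> L')"
  using t[unfolded tMAA_def]
proof (rule teq3_sum_list_eq)
  fix b p q c assume b: "b \<in> Bc D x" and p: "p \<in> Mc x x" and q: "q \<in> Ah D x x" and c: "c \<in> Ah D x y"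
  have fc: "f c \<in> Ah D x z" by (rule EndC_closed[OF f c])
  have "act x x w (act x x x p (fi D x b)) (g (cmp D x x z q (f c))) =
      act x x w p (cmp D x x w (fi D x b) (g (cmp D x x z q (f c))))"
    by (rule rmodD(8)[OF r p fi_closed[OF b] EndC_closed[OF g cmp_closed[OF q fc]]])
  also have "\<dots> = act x x w p (g (lB D x z b (cmp D x x z q (f c))))"
    using EndC_lB[OF g b cmp_closed[OF q fc]] by (simp add: lB_def)
  also have "lB D x z b (cmp D x x z q (f c)) = cmp D x x z (lB D x x b q) (f c)"
    by (simp add: lB_def cmp_assoc fi_closed[OF b] q fc)
  finally show "\<phi> ((\<lambda>b m. act x x x m (fi D x b)) b p, q, c) = \<phi> (p, lB D x x b q, c)"
    by (simp add: \<phi>_def)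
next
  fix b p q c assume b: "b \<in> Bc D x" and p: "p \<in> Mc x x" and q: "q \<in> Ah D x x" and c: "c \<in> Ah D x y"
  have fc: "f c \<in> Ah D x z" by (rule EndC_closed[OF f c])
  have "cmp D x x z (cmp D x x x q (fi D x b)) (f c) = cmp D x x z q (cmp D x x z (fi D x b) (f c))"
    by (rule cmp_assoc[OF q fi_closed[OF b] fc])
  also have "\<dots> = cmp D x x z q (f (lB D x y b c))"
    using EndC_lB[OF f b c] by (simp add: lB_def)
  finally show "\<phi> (p, (\<lambda>b a. cmp D x x x a (fi D x b)) b q, c) = \<phi> (p, q, lB D x y b c)"
    by (simp add: \<phi>_def)
qed (auto simp: \<phi>_def rmodD(4,5)[OF r] EndC_closed[OF f] EndC_closed[OF g] cmp_closed
    cmp_add_left cmp_add_right EndC_add[OF g] EndC_add[OF f])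

lemma tMA_dual_basis_expansion:
  assumes r: "rmod D sM Mc act" and p: "p \<in> Mc x x" and a: "a \<in> Ah D x y"
  shows "tMA D Mc act x y [(p, a)] (map (\<lambda>k. (act x x x p (fi D x (Ph x y k a)), E x y k)) [0..<N x y])"
proof -
  have "tMA D Mc act x y [(p, a)] (map (\<lambda>k. (p, lB D x y (Ph x y k a) (E x y k))) [0..<N x y])"
    unfolding tMA_def
    using teq2_sum_right[OF p Ah_zero[of x y] Ah_add[of _ x y], where n = "N x y" and h = "\<lambda>k. lB D x y (Ph x y k a) (E x y k)"]
    by (simp add: dual_basis_expansion[OF a, symmetric] lB_closed Ph_closed a E_closed)
  moreover have "tMA D Mc act x y (concat (map (\<lambda>k. [(p, lB D x y (Ph x y k a) (E x y k))]) [0..<N x y]))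
      (concat (map (\<lambda>k. [(act x x x p (fi D x (Ph x y k a)), E x y k)]) [0..<N x y]))"
    unfolding tMA_def
    by (rule teq2_concat, rule teq2_sym, rule teq2_balance)
      (auto simp: Ph_closed a E_closed p lB_closed intro!: rmodD(3)[OF r] fi_closed)
  ultimately show ?thesis by (auto intro: tMA_trans)
qed

context
  fixes sM :: "'k \<Rightarrow> 'm::ab_group_add \<Rightarrow> 'm" and Mc act \<sigma>
  assumes desc: "descent D sM Mc act \<sigma>"
begin

private lemma rmod: "rmod D sM Mc act"
  by (rule descentD(1)[OF desc])

private lemma sigma_closed: "m \<in> Mc x y \<Longrightarrow> (p, a) \<in> set (\<sigma> x y m) \<Longrightarrow> p \<in> Mc x x \<and> a \<in> Ah D x y"
  using descentD(2)[OF desc] by blast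

lemma desc_action_closed:
  assumes m: "m \<in> Mc x y" and f: "f \<in> EndC D x y z"
  shows "desc_action act \<sigma> x y z m f \<in> Mc x z"
  unfolding desc_action_def using descentD(2)[OF desc m]
  by (intro ksubmod_sum_list[OF rmodD(2)[OF rmod]]) (auto intro!: rmodD(3)[OF rmod] EndC_closed[OF f])

lemma desc_action_add:
  assumes m: "m \<in> Mc x y" and m': "m' \<in> Mc x y" and f: "f \<in> EndC D x y z"
  shows "desc_action act \<sigma> x y z (m + m') f = desc_action act \<sigma> x y z m f + desc_action act \<sigma> x y z m' f"
  unfolding desc_action_def using tMA_sum_list_EndC_eq[OF rmod f descentD(3)[OF desc m m']] by simp

lemma desc_action_cadd:
  assumes m: "m \<in> Mc x y" and f: "f \<in> EndC D x y z" and g: "g \<in> EndC D x y z"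
  shows "desc_action act \<sigma> x y z m (cadd D x y f g) =
    desc_action act \<sigma> x y z m f + desc_action act \<sigma> x y z m g"
proof -
  have e: "map (\<lambda>(p, a). act x x z p (cadd D x y f g a)) (\<sigma> x y m) =
      map (\<lambda>l. (case l of (p, a) \<Rightarrow> act x x z p (f a)) + (case l of (p, a) \<Rightarrow> act x x z p (g a))) (\<sigma> x y m)"
    using descentD(2)[OF desc m]
    by (auto simp: cadd_def rmodD(5)[OF rmod] EndC_closed[OF f] EndC_closed[OF g])
  show ?thesis unfolding desc_action_def e by (rule sum_list_addf)
qed

lemma desc_action_scale:
  assumes m: "m \<in> Mc x y" and f: "f \<in> EndC D x y z"
  shows "desc_action act \<sigma> x y z (sM c m) f = sM c (desc_action act \<sigma> x y z m f)"
proof -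
  have "desc_action act \<sigma> x y z (sM c m) f =
      sum_list (map (\<lambda>(p, a). act x x z p (f a)) (map (\<lambda>(p, a). (sM c p, a)) (\<sigma> x y m)))"
    unfolding desc_action_def using tMA_sum_list_EndC_eq[OF rmod f descentD(4)[OF desc m]] by simp
  also have "\<dots> = sum_list (map (\<lambda>l. sM c (case l of (p, a) \<Rightarrow> act x x z p (f a))) (\<sigma> x y m))"
    by (auto simp: rmodD(6)[OF rmod] EndC_closed[OF f] intro!: arg_cong[where f = sum_list]
        dest!: sigma_closed[OF m])
  finally show ?thesis
    unfolding desc_action_def by (simp add: module_scale_sum_list[OF rmodD(1)[OF rmod]])
qed

lemma desc_action_csc:
  assumes m: "m \<in> Mc x y" and f: "f \<in> EndC D x y z"
  shows "desc_action act \<sigma> x y z m (csc D x y c f) = sM c (desc_action act \<sigma> x y z m f)"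
proof -
  have "desc_action act \<sigma> x y z m (csc D x y c f) =
      sum_list (map (\<lambda>l. sM c (case l of (p, a) \<Rightarrow> act x x z p (f a))) (\<sigma> x y m))"
    unfolding desc_action_def
    by (auto simp: csc_def rmodD(7)[OF rmod] EndC_closed[OF f] intro!: arg_cong[where f = sum_list]
        dest!: sigma_closed[OF m])
  then show ?thesis
    unfolding desc_action_def by (simp add: module_scale_sum_list[OF rmodD(1)[OF rmod]])
qed

lemma desc_action_cunit:
  assumes m: "m \<in> Mc x y"
  shows "desc_action act \<sigma> x y y m (cunit D x y) = m"
proof -
  have "desc_action act \<sigma> x y y m (cunit D x y) = sum_list (map (\<lambda>(p, a). act x x y p a) (\<sigma> x y m))"
    unfolding desc_action_def
    by (auto simp: cunit_def intro!: arg_cong[where f = sum_list] dest!: sigma_closed[OF m])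
  then show ?thesis using descentD(7)[OF desc m] by simp
qed

lemma desc_action_ccomp:
  assumes m: "m \<in> Mc x y" and f: "f \<in> EndC D x y z" and g: "g \<in> EndC D x z w"
  shows "desc_action act \<sigma> x z w (desc_action act \<sigma> x y z m f) g =
    desc_action act \<sigma> x y w m (ccomp D x y f g)"
proof -
  let ?\<phi> = "\<lambda>(q, a', a). act x x w q (g (cmp D x x z a' (f a)))"
  have cond_i: "desc_action act \<sigma> x z w (act x x z p (f a)) g =
      sum_list (map (\<lambda>(q, a'). act x x w q (g (cmp D x x z a' (f a)))) (\<sigma> x x p))"
    if "(p, a) \<in> set (\<sigma> x y m)" for p a
  proof -
    have p: "p \<in> Mc x x" and a: "a \<in> Ah D x y" using sigma_closed[OF m that] by auto
    show ?thesis unfolding desc_action_def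
      using tMA_sum_list_EndC_eq[OF rmod g descentD(5)[OF desc p EndC_closed[OF f a]]]
      by (simp add: case_prod_unfold o_def)
  qed
  have "desc_action act \<sigma> x z w (desc_action act \<sigma> x y z m f) g =
      sum_list (map (\<lambda>(p, a). desc_action act \<sigma> x z w (act x x z p (f a)) g) (\<sigma> x y m))"
    unfolding desc_action_def[of act \<sigma> x y z] using rmodD(2)[OF rmod, of x z]
    by (subst additive_on_sum_list[where S = "Mc x z"])
      (auto simp: ksubmod_zero ksubmod_add desc_action_add[OF _ _ g] case_prod_unfold
        intro!: rmodD(3)[OF rmod] EndC_closed[OF f] dest!: sigma_closed[OF m])
  also have "\<dots> = sum_list (map ?\<phi> (concat (map (\<lambda>(p, a). map (\<lambda>(q, a'). (q, a', a)) (\<sigma> x x p)) (\<sigma> x y m))))"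
    by (auto simp: sum_list_map_concat case_prod_unfold o_def cond_i intro!: arg_cong[where f = sum_list])
  also have "\<dots> = sum_list (map ?\<phi> (map (\<lambda>(p, a). (p, one D x, a)) (\<sigma> x y m)))"
    by (rule tMAA_sum_list_ccomp_eq[OF rmod f g descentD(6)[OF desc m]])
  also have "\<dots> = desc_action act \<sigma> x y w m (ccomp D x y f g)"
    unfolding desc_action_def
    by (auto simp: ccomp_def cmp_one_left EndC_closed[OF f] intro!: arg_cong[where f = sum_list]
        dest!: sigma_closed[OF m])
  finally show ?thesis .
qed

theorem descent_rcmod: "rcmod D sM Mc (desc_action act \<sigma>)"
  unfolding rcmod_def
  by (simp add: rmodD(1,2)[OF rmod] desc_action_closed desc_action_add desc_action_cadd
      desc_action_scale desc_action_csc desc_action_ccomp desc_action_cunit)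

section \<open>A descent datum is determined by its endocluster action\<close>

text \<open>\<open>\<sigma>(m) = m\<^sub><\<^sub>0\<^sub>> \<otimes> \<Sum>\<^sub>j \<phi>\<^sub>j(m\<^sub><\<^sub>1\<^sub>>) e\<^sub>j = \<Sum>\<^sub>j m\<^sub><\<^sub>0\<^sub>> i(\<phi>\<^sub>j(m\<^sub><\<^sub>1\<^sub>>)) \<otimes> e\<^sub>j = \<Sum>\<^sub>j m\<cdot>coord\<^sub>j \<otimes> e\<^sub>j\<close>.\<close>

lemma descent_sigma_standard_form:
  assumes m: "m \<in> Mc x y"
  shows "tMA D Mc act x y (\<sigma> x y m) (map (\<lambda>j. (desc_action act \<sigma> x y x m (coord x y j), E x y j)) [0..<N x y])"
proof -
  note r = descentD(1)[OF desc] and sig = descentD(2)[OF desc m]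
  let ?L = "\<sigma> x y m"
  let ?F = "\<lambda>l k. (act x x x (fst l) (fi D x (Ph x y k (snd l))), E x y k)"
  have "tMA D Mc act x y (concat (map (\<lambda>l. [l]) ?L)) (concat (map (\<lambda>l. map (?F l) [0..<N x y]) ?L))"
    by (rule tMA_concat) (use sig in \<open>auto intro!: tMA_dual_basis_expansion[OF r]\<close>)
  also have "tMA D Mc act x y \<dots> (concat (map (\<lambda>k. map (\<lambda>l. ?F l k) ?L) [0..<N x y]))"
    by (rule tMA_mset[OF mset_concat_map_swap])
      (use sig in \<open>auto intro!: rmodD(3)[OF r] fi_closed Ph_closed E_closed\<close>)
  also have "tMA D Mc act x y \<dots>
      (concat (map (\<lambda>k. [(desc_action act \<sigma> x y x m (coord x y k), E x y k)]) [0..<N x y]))"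
  proof (rule tMA_concat)
    fix k assume k: "k \<in> set [0..<N x y]"
    have "desc_action act \<sigma> x y x m (coord x y k) =
        sum_list (map (\<lambda>l. act x x x (fst l) (fi D x (Ph x y k (snd l)))) ?L)"
      unfolding desc_action_def by (rule arg_cong[where f = sum_list]) (use sig in \<open>auto simp: coord_apply\<close>)
    moreover have "tMA D Mc act x y
        [(sum_list (map (\<lambda>l. act x x x (fst l) (fi D x (Ph x y k (snd l)))) ?L), E x y k)] (map (\<lambda>l. ?F l k) ?L)"
      by (rule tMA_sum_list_left[where Mc = Mc and x = x, OF rmodD(2)[OF r]])
        (use k sig in \<open>auto intro!: E_closed rmodD(3)[OF r] fi_closed Ph_closed\<close>)
    ultimately show "tMA D Mc act x y (map (\<lambda>l. ?F l k) ?L) [(desc_action act \<sigma> x y x m (coord x y k), E x y k)]"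
      by (simp add: tMA_sym)
  qed
  finally show ?thesis by simp
qed

lemma desc_action_rmult:
  assumes m: "m \<in> Mc x y" and a: "a \<in> Ah D y z"
  shows "desc_action act \<sigma> x y z m (rmult x y z a) = act x y z m a"
proof -
  note r = descentD(1)[OF desc] and sig = descentD(2)[OF desc m]
  have "desc_action act \<sigma> x y z m (rmult x y z a) =
      sum_list (map (\<lambda>l. act x y z ((\<lambda>(p, a'). act x x y p a') l) a) (\<sigma> x y m))"
    unfolding desc_action_def
    by (rule arg_cong[where f = sum_list]) (use sig in \<open>auto simp: rmult_apply rmodD(8)[OF r] a\<close>)
  also have "\<dots> = act x y z (sum_list (map (\<lambda>(p, a'). act x x y p a') (\<sigma> x y m))) a"
    by (rule rmod_act_sum_list[OF r _ a, symmetric]) (use sig in \<open>auto intro: rmodD(3)[OF r]\<close>)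
  finally show ?thesis using descentD(7)[OF desc m] by simp
qed

end
theorem descent_determined_by_desc_action:
  assumes d: "descent D sM Mc act \<sigma>" and d': "descent D sM Mc act' \<sigma>'"
    and same: "same_cmod D Mc (desc_action act \<sigma>) (desc_action act' \<sigma>')"
  shows "same_desc D Mc act \<sigma> act' \<sigma>'"
proof -
  have same_act: "act x y z m a = act' x y z m a" if "m \<in> Mc x y" "a \<in> Ah D y z" for x y z m a
  proof -
    have "desc_action act \<sigma> x y z m (rmult x y z a) = desc_action act' \<sigma>' x y z m (rmult x y z a)"
      using same that rmult_EndC[OF that(2)] unfolding same_cmod_def by blast
    then show ?thesis using desc_action_rmult[OF d that] desc_action_rmult[OF d' that] by simp
  qed
  have "tMA D Mc act x y (\<sigma> x y m) (\<sigma>' x y m)" if m: "m \<in> Mc x y" for x y m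
  proof -
    have e: "map (\<lambda>j. (desc_action act' \<sigma>' x y x m (coord x y j), E x y j)) [0..<N x y] =
        map (\<lambda>j. (desc_action act \<sigma> x y x m (coord x y j), E x y j)) [0..<N x y]"
      using same m coord_EndC by (auto simp: same_cmod_def)
    have c: "tMA D Mc act' x y = tMA D Mc act x y"
      by (rule tMA_cong) (simp add: same_act fi_closed)
    have "tMA D Mc act x y (\<sigma>' x y m)
        (map (\<lambda>j. (desc_action act \<sigma> x y x m (coord x y j), E x y j)) [0..<N x y])"
      using descent_sigma_standard_form[OF d' m] by (simp only: c e)
    with descent_sigma_standard_form[OF d m] show ?thesis by (blast intro: tMA_sym tMA_trans)
  qed
  then show ?thesis using same_act by (simp add: same_desc_def)
qed

lemma desc_hom_imp_rcmod_hom: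
  assumes d: "descent D sM Mc act \<sigma>" and d': "descent D sN Nc act' \<sigma>'"
    and h: "desc_hom D sM Mc act \<sigma> sN Nc act' \<sigma>' f"
  shows "rcmod_hom D sM Mc (desc_action act \<sigma>) sN Nc (desc_action act' \<sigma>') f"
proof -
  note r = descentD(1)[OF d] and r' = descentD(1)[OF d']
  from h have kf: "klin_fam sM Mc sN Nc f"
    and f_act: "\<And>x y z m a. m \<in> Mc x y \<Longrightarrow> a \<in> Ah D y z \<Longrightarrow> f x z (act x y z m a) = act' x y z (f x y m) a"
    and f_sigma: "\<And>x y m. m \<in> Mc x y \<Longrightarrow>
      tMA D Nc act' x y (map (\<lambda>(p, a). (f x x p, a)) (\<sigma> x y m)) (\<sigma>' x y (f x y m))"
    by (auto simp: desc_hom_def rmod_hom_def)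
  have f_add: "\<And>x y m m'. m \<in> Mc x y \<Longrightarrow> m' \<in> Mc x y \<Longrightarrow> f x y (m + m') = f x y m + f x y m'"
    using kf by (auto simp: klin_fam_def)
  have "f x z (desc_action act \<sigma> x y z m g) = desc_action act' \<sigma>' x y z (f x y m) g"
    if m: "m \<in> Mc x y" and g: "g \<in> EndC D x y z" for x y z m g
  proof -
    note sig = descentD(2)[OF d m]
    have "f x z (desc_action act \<sigma> x y z m g) =
        sum_list (map (\<lambda>l. f x z ((\<lambda>(p, a). act x x z p (g a)) l)) (\<sigma> x y m))"
      unfolding desc_action_def using rmodD(2)[OF r, of x z]
      by (intro additive_on_sum_list[where S = "Mc x z"])
        (use sig in \<open>auto simp: ksubmod_zero ksubmod_add f_add intro!: rmodD(3)[OF r] EndC_closed[OF g]\<close>)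
    also have "\<dots> = sum_list (map (\<lambda>(p, a). act' x x z p (g a)) (map (\<lambda>(p, a). (f x x p, a)) (\<sigma> x y m)))"
      by (rule arg_cong[where f = sum_list]) (use sig in \<open>auto simp: f_act EndC_closed[OF g]\<close>)
    also have "\<dots> = desc_action act' \<sigma>' x y z (f x y m) g"
      unfolding desc_action_def by (rule tMA_sum_list_EndC_eq[OF r' g f_sigma[OF m]])
    finally show ?thesis .
  qed
  with kf show ?thesis by (simp add: rcmod_hom_def)
qed

lemma rcmod_hom_imp_desc_hom:
  assumes d: "descent D sM Mc act \<sigma>" and d': "descent D sN Nc act' \<sigma>'"
    and h: "rcmod_hom D sM Mc (desc_action act \<sigma>) sN Nc (desc_action act' \<sigma>') f"
  shows "desc_hom D sM Mc act \<sigma> sN Nc act' \<sigma>' f"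
proof -
  from h have kf: "klin_fam sM Mc sN Nc f"
    and f_rho: "\<And>x y z m g. m \<in> Mc x y \<Longrightarrow> g \<in> EndC D x y z \<Longrightarrow>
      f x z (desc_action act \<sigma> x y z m g) = desc_action act' \<sigma>' x y z (f x y m) g"
    by (auto simp: rcmod_hom_def)
  have f_closed: "\<And>x y m. m \<in> Mc x y \<Longrightarrow> f x y m \<in> Nc x y"
    and f_add: "\<And>x y m m'. m \<in> Mc x y \<Longrightarrow> m' \<in> Mc x y \<Longrightarrow> f x y (m + m') = f x y m + f x y m'"
    using kf by (auto simp: klin_fam_def)
  have f_act: "f x z (act x y z m a) = act' x y z (f x y m) a"
    if m: "m \<in> Mc x y" and a: "a \<in> Ah D y z" for x y z m a
    using f_rho[OF m rmult_EndC[OF a]] desc_action_rmult[OF d m a] desc_action_rmult[OF d' f_closed[OF m] a]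
    by simp
  have "tMA D Nc act' x y (map (\<lambda>(p, a). (f x x p, a)) (\<sigma> x y m)) (\<sigma>' x y (f x y m))"
    if m: "m \<in> Mc x y" for x y m
  proof -
    have "tMA D Nc act' x y (map (\<lambda>(p, a). (f x x p, a)) (\<sigma> x y m))
        (map (\<lambda>(p, a). (f x x p, a)) (map (\<lambda>j. (desc_action act \<sigma> x y x m (coord x y j), E x y j)) [0..<N x y]))"
      using descent_sigma_standard_form[OF d m] unfolding tMA_def
      by (rule teq2_map_left) (auto simp: f_closed f_add f_act fi_closed)
    also have "map (\<lambda>(p, a). (f x x p, a)) (map (\<lambda>j. (desc_action act \<sigma> x y x m (coord x y j), E x y j)) [0..<N x y])
        = map (\<lambda>j. (desc_action act' \<sigma>' x y x (f x y m) (coord x y j), E x y j)) [0..<N x y]"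
      using f_rho[OF m coord_EndC] by auto
    also have "tMA D Nc act' x y \<dots> (\<sigma>' x y (f x y m))"
      by (rule tMA_sym[OF descent_sigma_standard_form[OF d' f_closed[OF m]]])
    finally show ?thesis .
  qed
  with kf f_act show ?thesis by (simp add: desc_hom_def rmod_hom_def)
qed

section \<open>From right modules over the endocluster to descent data\<close>

lemma tMAA_sum_middle:
  assumes "p \<in> Mc x x" and "r \<in> Ah D x y" and "\<And>j. j < n \<Longrightarrow> h j \<in> Ah D x x"
  shows "tMAA D Mc act x y [(p, \<Sum>j<n. h j, r)] (map (\<lambda>j. (p, h j, r)) [0..<n])"
  unfolding tMAA_def using assms by (intro teq3_sum_middle) (auto simp: Ah_zero Ah_add)

lemma tMAA_balance_left:
  assumes "b \<in> Bc D x" "p \<in> Mc x x" "q \<in> Ah D x x" "r \<in> Ah D x y" "act x x x p (fi D x b) \<in> Mc x x"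
  shows "tMAA D Mc act x y [(act x x x p (fi D x b), q, r)] [(p, lB D x x b q, r)]"
  unfolding tMAA_def using assms by (intro teq3_balance_left) (auto simp: lB_closed)

lemma ccomp_coord_coord:
  assumes j: "j < N x y" and k: "k < N x x"
  shows "ccomp D x y (coord x y j) (coord x x k) =
    ccomp D x y (coord x y j) (rmult x x x (fi D x (Ph x x k (one D x))))"
proof
  fix c
  show "ccomp D x y (coord x y j) (coord x x k) c =
      ccomp D x y (coord x y j) (rmult x x x (fi D x (Ph x x k (one D x)))) c"
    using EndC_fi[OF coord_EndC[OF k] Ph_closed[OF j]]
    by (cases "c \<in> Ah D x y") (simp_all add: ccomp_def coord_apply rmult_apply fi_closed Ph_closed j one_closed)
qed

definition cluster_act ::
    "('x \<Rightarrow> 'x \<Rightarrow> 'x \<Rightarrow> 'm \<Rightarrow> ('a \<Rightarrow> 'a) \<Rightarrow> 'm) \<Rightarrow> 'x \<Rightarrow> 'x \<Rightarrow> 'x \<Rightarrow> 'm \<Rightarrow> 'a \<Rightarrow> 'm"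
  where "cluster_act \<rho> x y z m a = \<rho> x y z m (rmult x y z a)"

definition cluster_sigma ::
    "('x \<Rightarrow> 'x \<Rightarrow> 'x \<Rightarrow> 'm \<Rightarrow> ('a \<Rightarrow> 'a) \<Rightarrow> 'm) \<Rightarrow> 'x \<Rightarrow> 'x \<Rightarrow> 'm \<Rightarrow> ('m \<times> 'a) list"
  where "cluster_sigma \<rho> x y m = map (\<lambda>j. (\<rho> x y x m (coord x y j), E x y j)) [0..<N x y]"

context
  fixes sM :: "'k \<Rightarrow> 'm::ab_group_add \<Rightarrow> 'm" and Mc \<rho>
  assumes r: "rcmod D sM Mc \<rho>"
begin

lemma cluster_act_rmod: "rmod D sM Mc (cluster_act \<rho>)"
  unfolding rmod_def cluster_act_def
  by (simp add: rcmodD[OF r] rmult_EndC rmult_add rmult_scale ccomp_rmult rmult_one)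

lemma desc_action_cluster:
  assumes m: "m \<in> Mc x y" and f: "f \<in> EndC D x y z"
  shows "desc_action (cluster_act \<rho>) (cluster_sigma \<rho>) x y z m f = \<rho> x y z m f"
  unfolding desc_action_def cluster_sigma_def cluster_act_def
  by (simp add: rcmod_expansion[OF r m f] o_def sum_list_upt_eq_sum)

private lemma coord_action_closed: "m \<in> Mc x y \<Longrightarrow> j < N x y \<Longrightarrow> \<rho> x y x m (coord x y j) \<in> Mc x x"
  by (intro rcmodD(3)[OF r] coord_EndC)

lemma cluster_sigma_closed: "m \<in> Mc x y \<Longrightarrow> set (cluster_sigma \<rho> x y m) \<subseteq> Mc x x \<times> Ah D x y"
  by (auto simp: cluster_sigma_def coord_action_closed E_closed)

lemma cluster_sigma_add:
  assumes m: "m \<in> Mc x y" and m': "m' \<in> Mc x y"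
  shows "tMA D Mc (cluster_act \<rho>) x y (cluster_sigma \<rho> x y (m + m'))
    (cluster_sigma \<rho> x y m @ cluster_sigma \<rho> x y m')"
proof -
  let ?u = "\<lambda>j. \<rho> x y x m (coord x y j)" and ?v = "\<lambda>j. \<rho> x y x m' (coord x y j)"
  have split: "cluster_sigma \<rho> x y (m + m') = concat (map (\<lambda>j. [(?u j + ?v j, E x y j)]) [0..<N x y])"
    by (simp add: cluster_sigma_def rcmodD(4)[OF r m m' coord_EndC])
  have "tMA D Mc (cluster_act \<rho>) x y (concat (map (\<lambda>j. [(?u j + ?v j, E x y j)]) [0..<N x y]))
      (concat (map (\<lambda>j. [(?u j, E x y j), (?v j, E x y j)]) [0..<N x y]))"
    unfolding tMA_def
    by (rule teq2_concat, rule teq2_add_left)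
      (auto simp: coord_action_closed m m' E_closed ksubmod_add[OF rcmodD(2)[OF r]])
  also have "tMA D Mc (cluster_act \<rho>) x y \<dots> (cluster_sigma \<rho> x y m @ cluster_sigma \<rho> x y m')"
    unfolding cluster_sigma_def
    by (rule tMA_mset[OF mset_concat_map_pairs]) (auto simp: coord_action_closed m m' E_closed)
  finally show ?thesis unfolding split .
qed

lemma cluster_sigma_scale:
  assumes m: "m \<in> Mc x y"
  shows "tMA D Mc (cluster_act \<rho>) x y (cluster_sigma \<rho> x y (sM c m))
    (map (\<lambda>(p, a). (sM c p, a)) (cluster_sigma \<rho> x y m))"
proof -
  have "cluster_sigma \<rho> x y (sM c m) = map (\<lambda>(p, a). (sM c p, a)) (cluster_sigma \<rho> x y m)"
    by (simp add: cluster_sigma_def rcmodD(6)[OF r m coord_EndC])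
  then show ?thesis
    unfolding tMA_def using cluster_sigma_closed[OF ksubmod_scale[OF rcmodD(2)[OF r] m, of c]]
    by (simp add: teq2_refl)
qed

text \<open>Expanding the endomorphism \<open>c \<mapsto> i(\<phi>\<^sub>k(c a))\<close> of \<open>A\<^sub>x\<^sub>y\<close> in the dual basis.\<close>

lemma cluster_act_coord_expansion:
  assumes m: "m \<in> Mc x y" and a: "a \<in> Ah D y z" and k: "k < N x z"
  shows "sum_list (map (\<lambda>j. cluster_act \<rho> x x x (\<rho> x y x m (coord x y j))
      (fi D x (Ph x z k (cmp D x y z (E x y j) a)))) [0..<N x y])
    = \<rho> x z x (cluster_act \<rho> x y z m a) (coord x z k)"
proof -
  let ?f = "ccomp D x y (rmult x y z a) (coord x z k)"
  have f: "?f \<in> EndC D x y x" by (rule ccomp_EndC[OF rmult_EndC[OF a] coord_EndC[OF k]])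
  have fE: "?f (E x y j) = fi D x (Ph x z k (cmp D x y z (E x y j) a))" if "j < N x y" for j
    using that by (simp add: ccomp_def rmult_apply coord_apply E_closed cmp_closed a)
  have "\<rho> x z x (cluster_act \<rho> x y z m a) (coord x z k) = \<rho> x y x m ?f"
    unfolding cluster_act_def by (rule rcmodD(8)[OF r m rmult_EndC[OF a] coord_EndC[OF k]])
  also have "\<dots> = (\<Sum>j<N x y. \<rho> x x x (\<rho> x y x m (coord x y j)) (rmult x x x (?f (E x y j))))"
    by (rule rcmod_expansion[OF r m f])
  finally show ?thesis by (simp add: sum_list_upt_eq_sum cluster_act_def fE)
qed

lemma cluster_sigma_act:
  assumes m: "m \<in> Mc x y" and a: "a \<in> Ah D y z"
  shows "tMA D Mc (cluster_act \<rho>) x z (cluster_sigma \<rho> x z (cluster_act \<rho> x y z m a))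
    (map (\<lambda>(p, a'). (p, cmp D x y z a' a)) (cluster_sigma \<rho> x y m))"
proof -
  note ra = cluster_act_rmod
  let ?u = "\<lambda>j. \<rho> x y x m (coord x y j)" and ?v = "\<lambda>j. cmp D x y z (E x y j) a"
  let ?G = "\<lambda>j k. (cluster_act \<rho> x x x (?u j) (fi D x (Ph x z k (?v j))), E x z k)"
  have v: "?v j \<in> Ah D x z" if "j < N x y" for j using that by (simp add: cmp_closed E_closed a)
  have R: "map (\<lambda>(p, a'). (p, cmp D x y z a' a)) (cluster_sigma \<rho> x y m) =
      concat (map (\<lambda>j. [(?u j, ?v j)]) [0..<N x y])"
    by (simp add: cluster_sigma_def)
  have L: "cluster_sigma \<rho> x z (cluster_act \<rho> x y z m a) =
      concat (map (\<lambda>k. [(\<rho> x z x (cluster_act \<rho> x y z m a) (coord x z k), E x z k)]) [0..<N x z])"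
    by (simp add: cluster_sigma_def)
  have "tMA D Mc (cluster_act \<rho>) x z (concat (map (\<lambda>j. [(?u j, ?v j)]) [0..<N x y]))
      (concat (map (\<lambda>j. map (\<lambda>k. ?G j k) [0..<N x z]) [0..<N x y]))"
    by (rule tMA_concat) (auto intro!: tMA_dual_basis_expansion[OF ra] coord_action_closed m v)
  also have "tMA D Mc (cluster_act \<rho>) x z \<dots> (concat (map (\<lambda>k. map (\<lambda>j. ?G j k) [0..<N x y]) [0..<N x z]))"
    by (rule tMA_mset[OF mset_concat_map_swap])
      (auto intro!: rmodD(3)[OF ra] coord_action_closed m fi_closed Ph_closed v E_closed)
  also have "tMA D Mc (cluster_act \<rho>) x z \<dots>
      (concat (map (\<lambda>k. [(\<rho> x z x (cluster_act \<rho> x y z m a) (coord x z k), E x z k)]) [0..<N x z]))"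
  proof (rule tMA_concat)
    fix k assume "k \<in> set [0..<N x z]"
    then have k: "k < N x z" by simp
    have "tMA D Mc (cluster_act \<rho>) x z
        [(sum_list (map (\<lambda>j. cluster_act \<rho> x x x (?u j) (fi D x (Ph x z k (?v j)))) [0..<N x y]), E x z k)]
        (map (\<lambda>j. ?G j k) [0..<N x y])"
      by (rule tMA_sum_list_left[where Mc = Mc and x = x, OF rcmodD(2)[OF r]])
        (auto intro!: rmodD(3)[OF ra] coord_action_closed m fi_closed Ph_closed k v E_closed)
    then show "tMA D Mc (cluster_act \<rho>) x z (map (\<lambda>j. ?G j k) [0..<N x y])
        [(\<rho> x z x (cluster_act \<rho> x y z m a) (coord x z k), E x z k)]"
      unfolding cluster_act_coord_expansion[OF m a k] by (rule tMA_sym)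
  qed
  finally show ?thesis unfolding L R by (rule tMA_sym)
qed

lemma cluster_sigma_coassoc_term:
  assumes m: "m \<in> Mc x y" and j: "j < N x y"
  defines "u \<equiv> \<rho> x y x m (coord x y j)"
  shows "tMAA D Mc (cluster_act \<rho>) x y [(u, one D x, E x y j)]
    (map (\<lambda>k. (\<rho> x x x u (coord x x k), E x x k, E x y j)) [0..<N x x])"
proof -
  have u: "u \<in> Mc x x" unfolding u_def by (rule coord_action_closed[OF m j])
  have "tMAA D Mc (cluster_act \<rho>) x y [(u, one D x, E x y j)]
      (concat (map (\<lambda>k. [(u, lB D x x (Ph x x k (one D x)) (E x x k), E x y j)]) [0..<N x x]))"
    using tMAA_sum_middle[where Mc = Mc and x = x, OF u E_closed[OF j], where n = "N x x" and h = "\<lambda>k. lB D x x (Ph x x k (one D x)) (E x x k)"]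
    by (simp add: dual_basis_expansion[OF one_closed, symmetric] lB_closed Ph_closed one_closed E_closed)
  also have "tMAA D Mc (cluster_act \<rho>) x y \<dots> (concat (map (\<lambda>k. [(\<rho> x x x u (coord x x k), E x x k, E x y j)]) [0..<N x x]))"
  proof (rule tMAA_concat)
    fix k assume "k \<in> set [0..<N x x]"
    then have k: "k < N x x" by simp
    have b: "Ph x x k (one D x) \<in> Bc D x" by (rule Ph_closed[OF k one_closed])
    have act: "cluster_act \<rho> x x x u (fi D x (Ph x x k (one D x))) = \<rho> x x x u (coord x x k)"
      unfolding cluster_act_def u_def
      by (simp add: rcmodD(8)[OF r m coord_EndC[OF j] rmult_EndC[OF fi_closed[OF b]]]
          rcmodD(8)[OF r m coord_EndC[OF j] coord_EndC[OF k]] ccomp_coord_coord[OF j k])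
    have "tMAA D Mc (cluster_act \<rho>) x y [(\<rho> x x x u (coord x x k), E x x k, E x y j)]
        [(u, lB D x x (Ph x x k (one D x)) (E x x k), E x y j)]"
      using tMAA_balance_left[where Mc = Mc and act = "cluster_act \<rho>", OF b u E_closed[OF k] E_closed[OF j]]
      by (simp add: act rcmodD(3)[OF r u coord_EndC[OF k]])
    then show "tMAA D Mc (cluster_act \<rho>) x y [(u, lB D x x (Ph x x k (one D x)) (E x x k), E x y j)]
        [(\<rho> x x x u (coord x x k), E x x k, E x y j)]"
      by (rule tMAA_sym)
  qed
  finally show ?thesis by simp
qed

lemma cluster_sigma_coassoc:
  assumes m: "m \<in> Mc x y"
  shows "tMAA D Mc (cluster_act \<rho>) x y
    (concat (map (\<lambda>(p, a). map (\<lambda>(q, a'). (q, a', a)) (cluster_sigma \<rho> x x p)) (cluster_sigma \<rho> x y m)))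
    (map (\<lambda>(p, a). (p, one D x, a)) (cluster_sigma \<rho> x y m))"
proof -
  let ?u = "\<lambda>j. \<rho> x y x m (coord x y j)"
  have L: "concat (map (\<lambda>(p, a). map (\<lambda>(q, a'). (q, a', a)) (cluster_sigma \<rho> x x p)) (cluster_sigma \<rho> x y m))
      = concat (map (\<lambda>j. map (\<lambda>k. (\<rho> x x x (?u j) (coord x x k), E x x k, E x y j)) [0..<N x x]) [0..<N x y])"
    by (simp add: cluster_sigma_def o_def)
  have R: "map (\<lambda>(p, a). (p, one D x, a)) (cluster_sigma \<rho> x y m) =
      concat (map (\<lambda>j. [(?u j, one D x, E x y j)]) [0..<N x y])"
    by (simp add: cluster_sigma_def)
  show ?thesis unfolding L R
    by (rule tMAA_sym, rule tMAA_concat) (simp add: cluster_sigma_coassoc_term[OF m])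
qed

lemma cluster_sigma_counit:
  assumes m: "m \<in> Mc x y"
  shows "sum_list (map (\<lambda>(p, a). cluster_act \<rho> x x y p a) (cluster_sigma \<rho> x y m)) = m"
proof -
  have "sum_list (map (\<lambda>(p, a). cluster_act \<rho> x x y p a) (cluster_sigma \<rho> x y m)) =
      desc_action (cluster_act \<rho>) (cluster_sigma \<rho>) x y y m (cunit D x y)"
    unfolding desc_action_def cluster_sigma_def
    by (intro arg_cong[where f = sum_list] map_cong refl) (auto simp: cunit_def E_closed)
  also have "\<dots> = m" by (simp add: desc_action_cluster[OF m cunit_EndC] rcmodD(9)[OF r m])
  finally show ?thesis .
qed

theorem rcmod_descent: "descent D sM Mc (cluster_act \<rho>) (cluster_sigma \<rho>)"
  unfolding descent_def
  by (simp add: cluster_act_rmod cluster_sigma_closed cluster_sigma_add cluster_sigma_scale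
      cluster_sigma_act cluster_sigma_coassoc cluster_sigma_counit)

end

end

theorem theorem5p3:
  fixes D :: "('k::comm_ring_1, 'x, 'a::ab_group_add, 'b::ab_group_add) kdata"
  assumes "klin_cat D" and "diag_cat D" and "xfunctor D"
    and "\<forall>x y. fg_projective D x y"
  shows
    \<comment> \<open>the functor is well defined on objects\<close>
    "(\<forall>(sM :: 'k \<Rightarrow> 'm::ab_group_add \<Rightarrow> 'm) Mc act \<sigma>.
        descent D sM Mc act \<sigma> \<longrightarrow> rcmod D sM Mc (desc_action act \<sigma>)) \<and>
     \<comment> \<open>surjective on objects\<close>
     (\<forall>(sM :: 'k \<Rightarrow> 'm \<Rightarrow> 'm) Mc \<rho>. rcmod D sM Mc \<rho> \<longrightarrow>
        (\<exists>act \<sigma>. descent D sM Mc act \<sigma> \<and> same_cmod D Mc (desc_action act \<sigma>) \<rho>)) \<and>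
     \<comment> \<open>injective on objects\<close>
     (\<forall>(sM :: 'k \<Rightarrow> 'm \<Rightarrow> 'm) Mc act \<sigma> act' \<sigma>'.
        descent D sM Mc act \<sigma> \<and> descent D sM Mc act' \<sigma>' \<and>
        same_cmod D Mc (desc_action act \<sigma>) (desc_action act' \<sigma>') \<longrightarrow> same_desc D Mc act \<sigma> act' \<sigma>') \<and>
     \<comment> \<open>identity on morphisms: well defined, and bijective on hom-sets\<close>
     (\<forall>(sM :: 'k \<Rightarrow> 'm \<Rightarrow> 'm) Mc act \<sigma> (sN :: 'k \<Rightarrow> 'n::ab_group_add \<Rightarrow> 'n) Nc act' \<sigma>' f.
        descent D sM Mc act \<sigma> \<and> descent D sN Nc act' \<sigma>' \<longrightarrow>
        (desc_hom D sM Mc act \<sigma> sN Nc act' \<sigma>' f \<longleftrightarrow>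
         rcmod_hom D sM Mc (desc_action act \<sigma>) sN Nc (desc_action act' \<sigma>') f))"
proof -
  from assms(4) obtain N E Ph where "\<And>x y. is_dual_basis D x y (N x y) (E x y) (Ph x y)"
    unfolding fg_projective_iff_dual_basis by metis
  with assms(1,3) interpret dual_basis D N E Ph
    by unfold_locales
  show ?thesis
  proof (intro conjI allI impI)
    fix sM :: "'k \<Rightarrow> 'm \<Rightarrow> 'm" and Mc act \<sigma>
    assume "descent D sM Mc act \<sigma>"
    then show "rcmod D sM Mc (desc_action act \<sigma>)" by (rule descent_rcmod)
  next
    fix sM :: "'k \<Rightarrow> 'm \<Rightarrow> 'm" and Mc \<rho>
    assume "rcmod D sM Mc \<rho>"
    with rcmod_descent desc_action_cluster
    show "\<exists>act \<sigma>. descent D sM Mc act \<sigma> \<and> same_cmod D Mc (desc_action act \<sigma>) \<rho>"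
      unfolding same_cmod_def by blast
  next
    fix sM :: "'k \<Rightarrow> 'm \<Rightarrow> 'm" and Mc act \<sigma> act' \<sigma>'
    assume "descent D sM Mc act \<sigma> \<and> descent D sM Mc act' \<sigma>' \<and>
      same_cmod D Mc (desc_action act \<sigma>) (desc_action act' \<sigma>')"
    then show "same_desc D Mc act \<sigma> act' \<sigma>'" by (blast intro: descent_determined_by_desc_action)
  next
    fix sM :: "'k \<Rightarrow> 'm \<Rightarrow> 'm" and Mc act \<sigma> and sN :: "'k \<Rightarrow> 'n \<Rightarrow> 'n" and Nc act' \<sigma>' f
    assume "descent D sM Mc act \<sigma> \<and> descent D sN Nc act' \<sigma>'"
    then show "desc_hom D sM Mc act \<sigma> sN Nc act' \<sigma>' f \<longleftrightarrow>
        rcmod_hom D sM Mc (desc_action act \<sigma>) sN Nc (desc_action act' \<sigma>') f"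
      by (blast intro: desc_hom_imp_rcmod_hom rcmod_hom_imp_desc_hom)
  qed
qed

end
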